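(* Let $\gamma\in(0,+\infty)\setminus\mathbb N$, $f\in C^\infty(\mathbb S^n)$ and $m\in\mathbb N$. Then $B^{2\gamma}_{2j}(\rho^{2j}f)=f$ and $B^{2\gamma}_{2j}(\rho^{2j+2m}f)=0$ for $0\le j\le\lfloor\gamma/2\rfloor$, and $B^{2\gamma}_{2j+2[\gamma]}(\rho^{2j+2[\gamma]}f)=f$ and $B^{2\gamma}_{2j+2[\gamma]}(\rho^{2j+2[\gamma]+2m}f)=0$ for $0\le j\le\lfloor\gamma\rfloor-\lfloor\gamma/2\rfloor-1$.
   Context: $n\ge1$, $\mathbb B^{n+1}$ the unit ball in $\mathbb R^{n+1}$, $x=r\theta$, functions on $\mathbb S^n$ extended by $f(r\theta)=f(\theta)$; $\mathbb N=\{1,2,\dots\}$. $g_{\mathbb B}=\frac{4|dx|^2}{(1-|x|^2)^2}$, $\Delta_+$ its Laplace–Beltrami operator, $\rho=\frac{2(1-r)}{1+r}$. $\lfloor\gamma\rfloor$ integer part, $[\gamma]=\gamma-\lfloor\gamma\rfloor$, $s=\frac n2+\gamma$, $D_t=-\Delta_+-t(n-t)$. Boundary operators (small indices): $B^{2\gamma}_0(U)=U|_{\rho=0}$; for $1\le j\le\lfloor\gamma/2\rfloor$, $B^{2\gamma}_{2j}(U)=\frac1{b_{2j}}\rho^{-\frac n2+\gamma-2j}\prod_{l=0}^{j-1}D_{s-2l}\prod_{l=\lfloor\gamma\rfloor-j+1}^{\lfloor\gamma\rfloor}D_{s-2l}(\rho^{\frac n2-\gamma}U)|_{\rho=0}$;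 for $0\le j\le\lfloor\gamma\rfloor-\lfloor\gamma/2\rfloor-1$, $B^{2\gamma}_{2j+2[\gamma]}(U)=\frac{-1}{b_{2j+2[\gamma]}}\rho^{-\frac n2+\gamma-2j-2[\gamma]}\prod_{l=0}^{j}D_{s-2l}\prod_{l=\lfloor\gamma\rfloor-j+1}^{\lfloor\gamma\rfloor}D_{s-2l}(\rho^{\frac n2-\gamma}U)|_{\rho=0}$, where the nonzero constants $b_{2j},b_{2j+2[\gamma]}$ are chosen so that $B^{2\gamma}_{2j}(\rho^{2j})=1$ and $B^{2\gamma}_{2j+2[\gamma]}(\rho^{2j+2[\gamma]})=1$. *)

theory Defs
  imports "HOL-Analysis.Analysis"
begin

text \<open>The unit ball B^{n+1} is modelled inside a Euclidean space 'a with DIM('a) = n+1.\<close>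

definition partial_dir :: "'a::euclidean_space \<Rightarrow> ('a \<Rightarrow> real) \<Rightarrow> 'a \<Rightarrow> real" where
  "partial_dir b u x = deriv (\<lambda>t. u (x + t *\<^sub>R b)) 0"

definition partials :: "'a::euclidean_space list \<Rightarrow> ('a \<Rightarrow> real) \<Rightarrow> 'a \<Rightarrow> real" where
  "partials bs u = foldr partial_dir bs u"

definition smooth_on :: "'a::euclidean_space set \<Rightarrow> ('a \<Rightarrow> real) \<Rightarrow> bool" where
  "smooth_on S u \<longleftrightarrow> (\<forall>bs. set bs \<subseteq> Basis \<longrightarrow>
      continuous_on S (partials bs u) \<and>
      (\<forall>b\<in>Basis. \<forall>x\<in>S. (\<lambda>t. partials bs u (x + t *\<^sub>R b)) field_differentiable (at 0)))"

text \<open>Radial extension f(r\<theta>) = f(\<theta>); f is smooth on the sphere iff its radial extension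
  is smooth on the punctured space.\<close>
definition radial_ext :: "('a::euclidean_space \<Rightarrow> real) \<Rightarrow> 'a \<Rightarrow> real" where
  "radial_ext f x = f (x /\<^sub>R norm x)"

definition smooth_on_sphere :: "('a::euclidean_space \<Rightarrow> real) \<Rightarrow> bool" where
  "smooth_on_sphere f \<longleftrightarrow> smooth_on (- {0}) (radial_ext f)"

text \<open>Conformal factor: g_B = lam^2 |dx|^2 with lam = 2/(1-|x|^2).\<close>
definition lamB :: "'a::euclidean_space \<Rightarrow> real" where
  "lamB x = 2 / (1 - (norm x)\<^sup>2)"

text \<open>Laplace--Beltrami of g_B in coordinates: (1/sqrt g) d_i (sqrt g g^{ij} d_j u),
  with sqrt g = lam^N, g^{ij} = lam^{-2} delta_ij, N = DIM('a).\<close>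
definition LB :: "('a::euclidean_space \<Rightarrow> real) \<Rightarrow> 'a \<Rightarrow> real" where
  "LB u x = (1 / lamB x ^ DIM('a)) *
     (\<Sum>b\<in>Basis. partial_dir b (\<lambda>y. lamB y ^ DIM('a) * (1 / (lamB y)\<^sup>2) * partial_dir b u y) x)"

definition rhoB :: "'a::euclidean_space \<Rightarrow> real" where
  "rhoB x = 2 * (1 - norm x) / (1 + norm x)"

definition Dop :: "nat \<Rightarrow> real \<Rightarrow> ('a::euclidean_space \<Rightarrow> real) \<Rightarrow> 'a \<Rightarrow> real" where
  "Dop n t u x = - LB u x - t * (real n - t) * u x"

definition Dprod :: "nat \<Rightarrow> real list \<Rightarrow> ('a::euclidean_space \<Rightarrow> real) \<Rightarrow> 'a \<Rightarrow> real" where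
  "Dprod n ts u = foldr (Dop n) ts u"

definition sval :: "nat \<Rightarrow> real \<Rightarrow> real" where
  "sval n \<gamma> = real n / 2 + \<gamma>"

definition fracp :: "real \<Rightarrow> real" where
  "fracp \<gamma> = \<gamma> - of_int \<lfloor>\<gamma>\<rfloor>"

definition ts_even :: "nat \<Rightarrow> real \<Rightarrow> nat \<Rightarrow> real list" where
  "ts_even n \<gamma> j = map (\<lambda>l. sval n \<gamma> - 2 * real l)
     ([0..<j] @ [nat \<lfloor>\<gamma>\<rfloor> + 1 - j ..< nat \<lfloor>\<gamma>\<rfloor> + 1])"

definition ts_odd :: "nat \<Rightarrow> real \<Rightarrow> nat \<Rightarrow> real list" where
  "ts_odd n \<gamma> j = map (\<lambda>l. sval n \<gamma> - 2 * real l)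
     ([0..<j+1] @ [nat \<lfloor>\<gamma>\<rfloor> + 1 - j ..< nat \<lfloor>\<gamma>\<rfloor> + 1])"

definition Bpre_even :: "nat \<Rightarrow> real \<Rightarrow> nat \<Rightarrow> ('a::euclidean_space \<Rightarrow> real) \<Rightarrow> 'a \<Rightarrow> real" where
  "Bpre_even n \<gamma> j U x = rhoB x powr (- real n / 2 + \<gamma> - 2 * real j) *
     Dprod n (ts_even n \<gamma> j) (\<lambda>y. rhoB y powr (real n / 2 - \<gamma>) * U y) x"

definition Bpre_odd :: "nat \<Rightarrow> real \<Rightarrow> nat \<Rightarrow> ('a::euclidean_space \<Rightarrow> real) \<Rightarrow> 'a \<Rightarrow> real" where
  "Bpre_odd n \<gamma> j U x = rhoB x powr (- real n / 2 + \<gamma> - 2 * real j - 2 * fracp \<gamma>) *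
     Dprod n (ts_odd n \<gamma> j) (\<lambda>y. rhoB y powr (real n / 2 - \<gamma>) * U y) x"

text \<open>Boundary value (restriction to rho = 0) of a function V at a boundary point:
  the limit of V(x) as x tends to the point from inside the ball.\<close>
definition bdry_val :: "('a::euclidean_space \<Rightarrow> real) \<Rightarrow> 'a \<Rightarrow> real" where
  "bdry_val V \<theta> = Lim (at \<theta> within ball 0 1) V"

definition base_pt :: "'a::euclidean_space" where
  "base_pt = (SOME b. b \<in> Basis)"

text \<open>Normalising constants: B(rho^{2j}) = 1 and B(rho^{2j+2[gamma]}) = 1
  (the unnormalised boundary values of radial functions are constant on the sphere).\<close>
definition b_even :: "nat \<Rightarrow> real \<Rightarrow> nat \<Rightarrow> 'a::euclidean_space itself \<Rightarrow> real" where
  "b_even n \<gamma> j _ = bdry_val (Bpre_even n \<gamma> j (\<lambda>x::'a. rhoB x ^ (2 * j))) base_pt"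

definition b_odd :: "nat \<Rightarrow> real \<Rightarrow> nat \<Rightarrow> 'a::euclidean_space itself \<Rightarrow> real" where
  "b_odd n \<gamma> j _ = - bdry_val (Bpre_odd n \<gamma> j (\<lambda>x::'a. rhoB x powr (2 * real j + 2 * fracp \<gamma>))) base_pt"

text \<open>The operators before restriction to rho = 0 (B_0(U) = U).\<close>
definition Bfun_even :: "nat \<Rightarrow> real \<Rightarrow> nat \<Rightarrow> ('a::euclidean_space \<Rightarrow> real) \<Rightarrow> 'a \<Rightarrow> real" where
  "Bfun_even n \<gamma> j U x = (if j = 0 then U x
     else (1 / b_even n \<gamma> j TYPE('a)) * Bpre_even n \<gamma> j U x)"

definition Bfun_odd :: "nat \<Rightarrow> real \<Rightarrow> nat \<Rightarrow> ('a::euclidean_space \<Rightarrow> real) \<Rightarrow> 'a \<Rightarrow> real" where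
  "Bfun_odd n \<gamma> j U x = (- 1 / b_odd n \<gamma> j TYPE('a)) * Bpre_odd n \<gamma> j U x"

end

theory Submission
  imports Defs "HOL-Computational_Algebra.Polynomial"
begin

text \<open>
  Near the sphere write functions as \<open>\<rho>\<^sup>a\<close> times a radial expansion \<open>\<Sum> q\<^sub>i(r) G\<^sub>i(x)\<close>, with
  Laurent polynomials \<open>q\<^sub>i\<close> in \<open>r = |x|\<close> and smooth \<open>G\<^sub>i\<close>. A direct computation gives
  \<open>D\<^sub>t(\<rho>\<^sup>a q G) = \<rho>\<^sup>a (q\<^sub>0 G + q\<^sub>1 x\<cdot>\<nabla>G + q\<^sub>2 \<Delta>G)\<close>, where \<open>q\<^sub>1, q\<^sub>2\<close> carry a factor \<open>1 - r\<^sup>2\<close> and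
  \<open>q\<^sub>0(1) = (a - t)(n - a - t) q(1)\<close>. So each \<open>D\<^sub>t\<close> preserves the shape
  \<open>\<rho>\<^sup>a (c F + terms vanishing on the sphere)\<close>, multiplying \<open>c\<close> by the indicial factor
  \<open>(a - t)(n - a - t)\<close>. After the product of the \<open>D\<^sub>s\<^sub>-\<^sub>2\<^sub>l\<close>, multiplying by \<open>\<rho>\<^sup>-\<^sup>a\<close> and letting \<open>x\<close>
  tend to the sphere leaves \<open>c F(\<theta>)\<close>, or \<open>0\<close> in the presence of an extra \<open>\<rho>\<^sup>2\<^sup>m\<close>. The
  normalising constant is the same \<open>c\<close> for \<open>F = 1\<close>; it is nonzero because \<open>\<gamma> \<notin> \<nat>\<close>, the factors
  being \<open>(2j + 2l - 2\<gamma>)(2l - 2j)\<close> with \<open>l \<noteq> j\<close>, resp.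
  \<open>(2j + 2l - 2\<lfloor>\<gamma>\<rfloor>)(2l - 2j - 2[\<gamma>])\<close> with \<open>j + l \<noteq> \<lfloor>\<gamma>\<rfloor>\<close>.
\<close>

section \<open>Directional derivatives and smoothness\<close>

lemma eventually_nhds_line_in_open:
  fixes x b :: "'a::real_normed_vector"
  assumes "open S" "x \<in> S"
  shows "\<forall>\<^sub>F t in nhds (0::real). x + t *\<^sub>R b \<in> S"
proof -
  have "open ((\<lambda>t::real. x + t *\<^sub>R b) -` S)"
    by (intro open_vimage assms(1) continuous_intros)
  then show ?thesis
    using eventually_nhds_in_open[of _ 0] assms(2) by force
qed

lemma partial_dir_eqI:
  "((\<lambda>t. u (x + t *\<^sub>R b)) has_real_derivative D) (at 0) \<Longrightarrow> partial_dir b u x = D"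
  unfolding partial_dir_def by (rule DERIV_imp_deriv)

lemma has_line_derivative_cong_open:
  fixes x b :: "'a::real_normed_vector"
  assumes "open S" "x \<in> S" "\<And>y. y \<in> S \<Longrightarrow> u y = v y"
    and "((\<lambda>t. u (x + t *\<^sub>R b)) has_real_derivative D) (at 0)"
  shows "((\<lambda>t. v (x + t *\<^sub>R b)) has_real_derivative D) (at 0)"
proof -
  have ev: "\<forall>\<^sub>F t in nhds 0. u (x + t *\<^sub>R b) = v (x + t *\<^sub>R b)"
    using eventually_nhds_line_in_open[OF assms(1,2), of b] assms(3)
    by (auto elim: eventually_mono)
  show ?thesis
    using DERIV_cong_ev[OF refl ev refl] assms(4) by simp
qed

lemma partial_dir_cong_open:
  assumes "open S" "x \<in> S" "\<And>y. y \<in> S \<Longrightarrow> u y = v y"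
  shows "partial_dir b u x = partial_dir b v x"
  unfolding partial_dir_def
  by (rule deriv_cong_ev)
     (use eventually_nhds_line_in_open[OF assms(1,2), of b] assms(3) in \<open>auto elim: eventually_mono\<close>)

lemma partial_dir_sum_list:
  assumes "\<forall>i\<in>set xs. (\<lambda>t. f i (x + t *\<^sub>R b)) field_differentiable (at 0)"
  shows "partial_dir b (\<lambda>y. \<Sum>i\<leftarrow>xs. f i y) x = (\<Sum>i\<leftarrow>xs. partial_dir b (f i) x)"
proof (rule partial_dir_eqI)
  show "((\<lambda>t. \<Sum>i\<leftarrow>xs. f i (x + t *\<^sub>R b)) has_real_derivative (\<Sum>i\<leftarrow>xs. partial_dir b (f i) x)) (at 0)"
    using assms
    by (induction xs)
       (auto simp: partial_dir_def DERIV_deriv_iff_field_differentiable intro!: DERIV_add)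
qed

lemma partials_Nil [simp]: "partials [] u = u"
  by (simp add: partials_def)

lemma partials_Cons: "partials (b # bs) u = partial_dir b (partials bs u)"
  by (simp add: partials_def)

lemma partials_snoc: "partials (bs @ [b]) u = partials bs (partial_dir b u)"
  by (simp add: partials_def)

lemma smooth_onD:
  assumes "smooth_on S u"
  shows "continuous_on S u" and "\<forall>b\<in>Basis. \<forall>x\<in>S. (\<lambda>t. u (x + t *\<^sub>R b)) field_differentiable (at 0)"
  using assms[unfolded smooth_on_def, rule_format, of "[]"] by simp_all

lemma smooth_on_has_line_derivative:
  assumes "smooth_on S u" "x \<in> S" "b \<in> Basis"
  shows "((\<lambda>t. u (x + t *\<^sub>R b)) has_real_derivative partial_dir b u x) (at 0)"
proof -
  have "(\<lambda>t. u (x + t *\<^sub>R b)) field_differentiable (at 0)"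
    using smooth_onD(2)[OF assms(1)] assms(2,3) by blast
  then show ?thesis
    unfolding partial_dir_def by (simp add: DERIV_deriv_iff_field_differentiable)
qed

lemma smooth_on_partial_dir:
  assumes "smooth_on S u" "b \<in> Basis"
  shows "smooth_on S (partial_dir b u)"
  unfolding smooth_on_def
proof (intro allI impI)
  fix bs :: "'a list"
  assume "set bs \<subseteq> Basis"
  then have "set (bs @ [b]) \<subseteq> Basis" using assms(2) by simp
  from assms(1)[unfolded smooth_on_def, rule_format, OF this]
  show "continuous_on S (partials bs (partial_dir b u)) \<and>
      (\<forall>c\<in>Basis. \<forall>x\<in>S. (\<lambda>t. partials bs (partial_dir b u) (x + t *\<^sub>R c)) field_differentiable at 0)"
    by (simp add: partials_snoc)
qed

lemma partial_dir_const: "partial_dir b (\<lambda>y. c) = (\<lambda>y. 0)"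
  by (intro ext partial_dir_eqI) simp

lemma partials_const: "partials bs (\<lambda>y. c) = (\<lambda>y. if bs = [] then c else 0)"
  by (induction bs) (auto simp: partials_Cons partial_dir_const)

lemma smooth_on_const: "smooth_on S (\<lambda>y. c)"
  unfolding smooth_on_def partials_const
  by (simp add: field_differentiable_const continuous_on_const)

lemma partial_dir_inner: "partial_dir c (\<lambda>y. y \<bullet> b) = (\<lambda>y. c \<bullet> b)"
  by (intro ext partial_dir_eqI) (auto simp: inner_add_left intro!: derivative_eq_intros)

lemma smooth_on_inner: "smooth_on S (\<lambda>y. y \<bullet> b)"
  unfolding smooth_on_def
proof (intro allI impI conjI ballI)
  fix bs :: "'a list" and c x :: 'a
  have "continuous_on S (partials bs (\<lambda>y. y \<bullet> b)) \<and>
      (\<lambda>t. partials bs (\<lambda>y. y \<bullet> b) (x + t *\<^sub>R c)) field_differentiable (at 0)"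
  proof (cases bs rule: rev_exhaust)
    case Nil
    have "((\<lambda>t. (x + t *\<^sub>R c) \<bullet> b) has_real_derivative c \<bullet> b) (at 0)"
      by (auto simp: inner_add_left intro!: derivative_eq_intros)
    then show ?thesis
      using Nil by (auto simp: field_differentiable_def intro!: continuous_intros)
  next
    case (snoc cs d)
    then show ?thesis
      by (simp add: partials_snoc partial_dir_inner partials_const field_differentiable_const
          continuous_on_const)
  qed
  then show "continuous_on S (partials bs (\<lambda>y. y \<bullet> b))"
    and "(\<lambda>t. partials bs (\<lambda>y. y \<bullet> b) (x + t *\<^sub>R c)) field_differentiable (at 0)"
    by auto
qed

definition sum_of_products :: "(('a \<Rightarrow> real) \<times> ('a \<Rightarrow> real)) list \<Rightarrow> 'a \<Rightarrow> real" where
  "sum_of_products L y = (\<Sum>(f, g)\<leftarrow>L. f y * g y)"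

definition leibniz_terms :: "'a::euclidean_space \<Rightarrow> (('a \<Rightarrow> real) \<times> ('a \<Rightarrow> real)) list
    \<Rightarrow> (('a \<Rightarrow> real) \<times> ('a \<Rightarrow> real)) list" where
  "leibniz_terms b L = concat (map (\<lambda>(f, g). [(partial_dir b f, g), (f, partial_dir b g)]) L)"

lemma sum_of_products_has_line_derivative:
  assumes "\<forall>(f, g)\<in>set L. smooth_on S f \<and> smooth_on S g" "x \<in> S" "b \<in> Basis"
  shows "((\<lambda>t. sum_of_products L (x + t *\<^sub>R b)) has_real_derivative
           sum_of_products (leibniz_terms b L) x) (at 0)"
  using assms(1)
proof (induction L)
  case Nil
  then show ?case by (simp add: sum_of_products_def leibniz_terms_def)
next
  case (Cons p L)
  obtain f g where p: "p = (f, g)" by fastforce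
  have "smooth_on S f" "smooth_on S g" using Cons.prems p by auto
  note df = smooth_on_has_line_derivative[OF this(1) assms(2,3)]
    and dg = smooth_on_has_line_derivative[OF this(2) assms(2,3)]
  have "((\<lambda>t. sum_of_products L (x + t *\<^sub>R b)) has_real_derivative
      sum_of_products (leibniz_terms b L) x) (at 0)"
    using Cons by auto
  from DERIV_add[OF DERIV_mult[OF df dg] this] show ?case
    by (simp add: p sum_of_products_def leibniz_terms_def algebra_simps)
qed

lemma continuous_on_sum_of_products:
  assumes "\<forall>(f, g)\<in>set L. smooth_on S f \<and> smooth_on S g"
  shows "continuous_on S (sum_of_products L)"
  using assms
  by (induction L)
     (auto simp: sum_of_products_def[abs_def] intro!: continuous_intros
       dest: smooth_onD(1))

lemma partials_sum_of_products:
  assumes "\<forall>(f, g)\<in>set L. smooth_on S f \<and> smooth_on S g" "open S" "set bs \<subseteq> Basis"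
  obtains L' where "\<forall>(f, g)\<in>set L'. smooth_on S f \<and> smooth_on S g"
    and "\<forall>x\<in>S. partials bs (sum_of_products L) x = sum_of_products L' x"
proof -
  have "\<exists>L'. (\<forall>(f, g)\<in>set L'. smooth_on S f \<and> smooth_on S g) \<and>
      (\<forall>x\<in>S. partials bs (sum_of_products L) x = sum_of_products L' x)"
    using assms(3)
  proof (induction bs)
    case Nil
    then show ?case using assms(1) by auto
  next
    case (Cons b bs)
    then obtain L' where L': "\<forall>(f, g)\<in>set L'. smooth_on S f \<and> smooth_on S g"
      "\<forall>x\<in>S. partials bs (sum_of_products L) x = sum_of_products L' x"
      by auto
    have b: "b \<in> Basis" using Cons.prems by simp
    have "partials (b # bs) (sum_of_products L) x = sum_of_products (leibniz_terms b L') x"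
      if x: "x \<in> S" for x
    proof -
      have "partials (b # bs) (sum_of_products L) x = partial_dir b (sum_of_products L') x"
        unfolding partials_Cons using partial_dir_cong_open[OF assms(2) x] L'(2) by blast
      also have "\<dots> = sum_of_products (leibniz_terms b L') x"
        by (rule partial_dir_eqI[OF sum_of_products_has_line_derivative[OF L'(1) x b]])
      finally show ?thesis .
    qed
    moreover have "\<forall>(f, g)\<in>set (leibniz_terms b L'). smooth_on S f \<and> smooth_on S g"
      using L'(1) b by (auto simp: leibniz_terms_def intro: smooth_on_partial_dir)
    ultimately show ?case by blast
  qed
  then show ?thesis using that by blast
qed

lemma smooth_on_sum_of_products:
  assumes "\<forall>(f, g)\<in>set L. smooth_on S f \<and> smooth_on S g" "open S"
  shows "smooth_on S (sum_of_products L)"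
  unfolding smooth_on_def
proof (intro allI impI conjI ballI)
  fix bs :: "'a list"
  assume "set bs \<subseteq> Basis"
  then obtain L' where L': "\<forall>(f, g)\<in>set L'. smooth_on S f \<and> smooth_on S g"
    and eq: "\<forall>x\<in>S. partials bs (sum_of_products L) x = sum_of_products L' x"
    using partials_sum_of_products[OF assms] by blast
  show "continuous_on S (partials bs (sum_of_products L))"
    using continuous_on_sum_of_products[OF L'] eq continuous_on_eq by (metis (no_types, lifting))
  fix b x :: 'a
  assume "b \<in> Basis" "x \<in> S"
  then have "((\<lambda>t. partials bs (sum_of_products L) (x + t *\<^sub>R b)) has_real_derivative
      sum_of_products (leibniz_terms b L') x) (at 0)"
    using has_line_derivative_cong_open[OF assms(2), of x "sum_of_products L'"] eq
      sum_of_products_has_line_derivative[OF L'] by simp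
  then show "(\<lambda>t. partials bs (sum_of_products L) (x + t *\<^sub>R b)) field_differentiable (at 0)"
    unfolding field_differentiable_def by blast
qed

definition euler_op :: "('a::euclidean_space \<Rightarrow> real) \<Rightarrow> 'a \<Rightarrow> real" where
  "euler_op G y = (\<Sum>b\<in>Basis. (y \<bullet> b) * partial_dir b G y)"

definition flat_laplacian :: "('a::euclidean_space \<Rightarrow> real) \<Rightarrow> 'a \<Rightarrow> real" where
  "flat_laplacian G y = (\<Sum>b\<in>Basis. partial_dir b (partial_dir b G) y)"

lemma smooth_on_sum_Basis_products:
  fixes f g :: "'a::euclidean_space \<Rightarrow> 'a \<Rightarrow> real"
  assumes "open S" "\<And>b. b \<in> Basis \<Longrightarrow> smooth_on S (f b) \<and> smooth_on S (g b)"
  shows "smooth_on S (\<lambda>y. \<Sum>b\<in>Basis. f b y * g b y)"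
proof -
  obtain bl :: "'a list" where bl: "set bl = Basis" "distinct bl"
    using finite_distinct_list[OF finite_Basis] by blast
  have "(\<lambda>y. \<Sum>b\<in>Basis. f b y * g b y) = sum_of_products (map (\<lambda>b. (f b, g b)) bl)"
    by (auto simp: sum_of_products_def o_def sum.distinct_set_conv_list[OF bl(2), symmetric] bl(1))
  moreover have "smooth_on S (sum_of_products (map (\<lambda>b. (f b, g b)) bl))"
    by (rule smooth_on_sum_of_products) (use assms bl(1) in auto)
  ultimately show ?thesis by simp
qed

lemma smooth_on_euler_op: "open S \<Longrightarrow> smooth_on S G \<Longrightarrow> smooth_on S (euler_op G)"
  unfolding euler_op_def[abs_def]
  by (intro smooth_on_sum_Basis_products smooth_on_inner smooth_on_partial_dir conjI)

lemma smooth_on_flat_laplacian: "open S \<Longrightarrow> smooth_on S G \<Longrightarrow> smooth_on S (flat_laplacian G)"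
  using smooth_on_sum_Basis_products[of S "\<lambda>b y. 1" "\<lambda>b. partial_dir b (partial_dir b G)"]
  by (simp add: flat_laplacian_def[abs_def] smooth_on_const smooth_on_partial_dir)

section \<open>Radial functions times smooth functions\<close>

lemma norm_has_line_derivative:
  fixes x b :: "'a::euclidean_space"
  assumes "x \<noteq> 0"
  shows "((\<lambda>t. norm (x + t *\<^sub>R b)) has_real_derivative (x \<bullet> b) / norm x) (at 0)"
proof -
  have "((\<lambda>t::real. x + t *\<^sub>R b) has_derivative (\<lambda>t. t *\<^sub>R b)) (at 0)"
    by (auto intro!: derivative_eq_intros)
  moreover have "(norm has_derivative (\<lambda>h. h \<bullet> sgn x)) (at (x + 0 *\<^sub>R b))"
    using has_derivative_norm[OF assms] by simp
  ultimately have "((\<lambda>t. norm (x + t *\<^sub>R b)) has_derivative (\<lambda>t. (t *\<^sub>R b) \<bullet> sgn x)) (at 0)"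
    using has_derivative_compose by fastforce
  moreover have "(\<lambda>t. (t *\<^sub>R b) \<bullet> sgn x) = (*) ((x \<bullet> b) / norm x)"
    by (auto simp: sgn_div_norm inner_commute field_simps)
  ultimately show ?thesis unfolding has_field_derivative_def by simp
qed

lemma radial_has_line_derivative:
  fixes x b :: "'a::euclidean_space"
  assumes "x \<noteq> 0" "(\<phi> has_real_derivative D) (at (norm x))"
  shows "((\<lambda>t. \<phi> (norm (x + t *\<^sub>R b))) has_real_derivative D * ((x \<bullet> b) / norm x)) (at 0)"
proof -
  have "(\<phi> has_real_derivative D) (at (norm (x + 0 *\<^sub>R b)))" using assms(2) by simp
  from DERIV_chain2[OF this norm_has_line_derivative[OF assms(1)]] show ?thesis .
qed

lemma radial_mult_has_line_derivative:
  fixes x b :: "'a::euclidean_space"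
  assumes "x \<noteq> 0" "(\<phi> has_real_derivative \<phi>') (at (norm x))"
    and "((\<lambda>t. G (x + t *\<^sub>R b)) has_real_derivative G') (at 0)"
  shows "((\<lambda>t. \<phi> (norm (x + t *\<^sub>R b)) * G (x + t *\<^sub>R b)) has_real_derivative
           \<phi>' * (x \<bullet> b) / norm x * G x + \<phi> (norm x) * G') (at 0)"
  using DERIV_mult[OF radial_has_line_derivative[OF assms(1,2)] assms(3)]
  by (simp add: algebra_simps)

text \<open>The terms are grouped so that summing over \<open>b \<in> Basis\<close> produces \<open>|x|\<^sup>2\<close>, \<open>euler_op G\<close>,
  \<open>DIM('a)\<close> and \<open>flat_laplacian G\<close>.\<close>

lemma radial_flux_has_line_derivative:
  fixes x b :: "'a::euclidean_space"
  assumes S: "open S" "x \<in> S" "0 \<notin> S" and b: "b \<in> Basis" and G: "smooth_on S G"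
    and \<phi>: "\<And>y. y \<in> S \<Longrightarrow> (\<phi> has_real_derivative \<phi>1 (norm y)) (at (norm y))"
    and \<phi>1: "(\<phi>1 has_real_derivative \<phi>2) (at r)" and \<Psi>: "(\<Psi> has_real_derivative \<Psi>1) (at r)"
    and r: "norm x = r"
  shows "((\<lambda>t. \<Psi> (norm (x + t *\<^sub>R b)) * partial_dir b (\<lambda>y. \<phi> (norm y) * G y) (x + t *\<^sub>R b))
      has_real_derivative
        ((\<Psi>1 * \<phi>1 r + \<Psi> r * \<phi>2) / r\<^sup>2 - \<Psi> r * \<phi>1 r / r ^ 3) * (x \<bullet> b)\<^sup>2 * G x
        + (\<Psi>1 * \<phi> r + 2 * \<Psi> r * \<phi>1 r) / r * (x \<bullet> b) * partial_dir b G x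
        + \<Psi> r * \<phi>1 r / r * G x + \<Psi> r * \<phi> r * partial_dir b (partial_dir b G) x) (at 0)"
proof -
  define D1 where "D1 y = \<phi>1 (norm y) * (y \<bullet> b) / norm y * G y + \<phi> (norm y) * partial_dir b G y"
    for y
  have D1: "partial_dir b (\<lambda>y. \<phi> (norm y) * G y) y = D1 y" if y: "y \<in> S" for y
  proof -
    have "y \<noteq> 0" using y S(3) by auto
    from partial_dir_eqI[OF radial_mult_has_line_derivative[OF this \<phi>[OF y]
          smooth_on_has_line_derivative[OF G y b]]]
    show ?thesis unfolding D1_def .
  qed
  have x0: "x \<noteq> 0" using S(2,3) by auto
  then have r0: "r \<noteq> 0" using r by auto
  have bb: "b \<bullet> b = 1" using b by simp
  have dG: "((\<lambda>t. G (x + t *\<^sub>R b)) has_real_derivative partial_dir b G x) (at 0)"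
    and dGb: "((\<lambda>t. partial_dir b G (x + t *\<^sub>R b)) has_real_derivative
       partial_dir b (partial_dir b G) x) (at 0)"
    using smooth_on_has_line_derivative[OF G S(2) b]
      smooth_on_has_line_derivative[OF smooth_on_partial_dir[OF G b] S(2) b] by simp_all
  have dinner: "((\<lambda>t. (x + t *\<^sub>R b) \<bullet> b) has_real_derivative 1) (at 0)"
    by (auto simp: inner_add_left bb intro!: derivative_eq_intros)
  have nz: "norm (x + 0 *\<^sub>R b) \<noteq> 0" using x0 by simp
  have "((\<lambda>t. \<Psi> (norm (x + t *\<^sub>R b)) * D1 (x + t *\<^sub>R b)) has_real_derivative
        ((\<Psi>1 * \<phi>1 r + \<Psi> r * \<phi>2) / r\<^sup>2 - \<Psi> r * \<phi>1 r / r ^ 3) * (x \<bullet> b)\<^sup>2 * G x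
        + (\<Psi>1 * \<phi> r + 2 * \<Psi> r * \<phi>1 r) / r * (x \<bullet> b) * partial_dir b G x
        + \<Psi> r * \<phi>1 r / r * G x + \<Psi> r * \<phi> r * partial_dir b (partial_dir b G) x) (at 0)"
    unfolding D1_def
    by (rule DERIV_cong[OF DERIV_mult[OF radial_has_line_derivative[OF x0, of \<Psi>] DERIV_add[OF
        DERIV_mult[OF DERIV_divide[OF DERIV_mult[OF radial_has_line_derivative[OF x0, of \<phi>1] dinner]
              norm_has_line_derivative[OF x0] nz] dG]
        DERIV_mult[OF radial_has_line_derivative[OF x0 \<phi>[OF S(2)]] dGb]]]])
       (use r0 \<phi>1 \<Psi> in \<open>simp_all add: r\<close>, simp add: field_simps power2_eq_square power3_eq_cube)
  then show ?thesis
    by (rule has_line_derivative_cong_open[OF S(1,2), rotated]) (simp add: D1)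
qed

lemma sum_Basis_inner_square: "(\<Sum>b\<in>Basis. (x \<bullet> b)\<^sup>2) = (norm x)\<^sup>2"
proof -
  have "(\<Sum>b\<in>Basis. (x \<bullet> b)\<^sup>2) = x \<bullet> x"
    by (simp add: euclidean_inner[of x x] power2_eq_square)
  then show ?thesis by (simp add: power2_norm_eq_inner)
qed

lemma radial_divergence:
  fixes x :: "'a::euclidean_space"
  assumes S: "open S" "x \<in> S" "0 \<notin> S" and G: "smooth_on S G"
    and \<phi>: "\<And>y. y \<in> S \<Longrightarrow> (\<phi> has_real_derivative \<phi>1 (norm y)) (at (norm y))"
    and \<phi>1: "(\<phi>1 has_real_derivative \<phi>2) (at r)" and \<Psi>: "(\<Psi> has_real_derivative \<Psi>1) (at r)"
    and r: "norm x = r"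
  shows "(\<Sum>b\<in>Basis. partial_dir b (\<lambda>y. \<Psi> (norm y) * partial_dir b (\<lambda>y. \<phi> (norm y) * G y) y) x) =
      (\<Psi>1 * \<phi>1 r + \<Psi> r * (\<phi>2 + (real DIM('a) - 1) * \<phi>1 r / r)) * G x
      + (\<Psi>1 * \<phi> r + 2 * \<Psi> r * \<phi>1 r) / r * euler_op G x + \<Psi> r * \<phi> r * flat_laplacian G x"
proof -
  define c1 where "c1 = (\<Psi>1 * \<phi>1 r + \<Psi> r * \<phi>2) / r\<^sup>2 - \<Psi> r * \<phi>1 r / r ^ 3"
  define c2 where "c2 = (\<Psi>1 * \<phi> r + 2 * \<Psi> r * \<phi>1 r) / r"
  define c3 where "c3 = \<Psi> r * \<phi>1 r / r"
  define c4 where "c4 = \<Psi> r * \<phi> r"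
  have r0: "r \<noteq> 0" using S r by auto
  have pd: "partial_dir b (\<lambda>y. \<Psi> (norm y) * partial_dir b (\<lambda>y. \<phi> (norm y) * G y) y) x =
      c1 * (x \<bullet> b)\<^sup>2 * G x + c2 * (x \<bullet> b) * partial_dir b G x + c3 * G x
      + c4 * partial_dir b (partial_dir b G) x" if "b \<in> Basis" for b
    unfolding c1_def c2_def c3_def c4_def
    by (rule partial_dir_eqI[OF radial_flux_has_line_derivative[OF S that G \<phi> \<phi>1 \<Psi> r]])
  have s1: "(\<Sum>b\<in>Basis. c1 * (x \<bullet> b)\<^sup>2 * G x) = c1 * r\<^sup>2 * G x"
    by (simp add: sum_distrib_right[symmetric] sum_distrib_left[symmetric] sum_Basis_inner_square r)
  have s2: "(\<Sum>b\<in>Basis. c2 * (x \<bullet> b) * partial_dir b G x) = c2 * euler_op G x"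
    by (simp add: euler_op_def sum_distrib_left mult.assoc)
  have s3: "(\<Sum>b\<in>(Basis::'a set). c3 * G x) = real DIM('a) * c3 * G x"
    by simp
  have s4: "(\<Sum>b\<in>Basis. c4 * partial_dir b (partial_dir b G) x) = c4 * flat_laplacian G x"
    by (simp add: flat_laplacian_def sum_distrib_left)
  have "(\<Sum>b\<in>Basis. partial_dir b (\<lambda>y. \<Psi> (norm y) * partial_dir b (\<lambda>y. \<phi> (norm y) * G y) y) x)
      = c1 * r\<^sup>2 * G x + c2 * euler_op G x + real DIM('a) * c3 * G x + c4 * flat_laplacian G x"
    by (simp only: sum.cong[OF refl pd] sum.distrib s1 s2 s3 s4)
  also have "\<dots> = (\<Psi>1 * \<phi>1 r + \<Psi> r * (\<phi>2 + (real DIM('a) - 1) * \<phi>1 r / r)) * G x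
      + c2 * euler_op G x + c4 * flat_laplacian G x"
    using r0 by (simp add: c1_def c3_def field_simps power2_eq_square power3_eq_cube)
  finally show ?thesis unfolding c2_def c4_def .
qed

lemma LB_cong_open:
  assumes "open S" "x \<in> S" "\<And>y. y \<in> S \<Longrightarrow> u y = v y"
  shows "LB u x = LB v x"
proof -
  have "partial_dir b (\<lambda>y. lamB y ^ DIM('a) * (1 / (lamB y)\<^sup>2) * partial_dir b u y) x =
      partial_dir b (\<lambda>y. lamB y ^ DIM('a) * (1 / (lamB y)\<^sup>2) * partial_dir b v y) x" for b
    by (rule partial_dir_cong_open[OF assms(1,2)])
       (simp add: partial_dir_cong_open[OF assms(1) _ assms(3)])
  then show ?thesis unfolding LB_def by simp
qed

lemma LB_sum_list:
  fixes us :: "('a::euclidean_space \<Rightarrow> real) list"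
  assumes S: "open S" "x \<in> S"
    and diff: "\<And>u b y. u \<in> set us \<Longrightarrow> b \<in> Basis \<Longrightarrow> y \<in> S \<Longrightarrow>
      (\<lambda>t. u (y + t *\<^sub>R b)) field_differentiable (at 0)"
    and flux_diff: "\<And>u b. u \<in> set us \<Longrightarrow> b \<in> Basis \<Longrightarrow>
      (\<lambda>t. lamB (x + t *\<^sub>R b) ^ DIM('a) * (1 / (lamB (x + t *\<^sub>R b))\<^sup>2)
        * partial_dir b u (x + t *\<^sub>R b)) field_differentiable (at 0)"
  shows "LB (\<lambda>y. \<Sum>u\<leftarrow>us. u y) x = (\<Sum>u\<leftarrow>us. LB u x)"
proof -
  define W where "W y = lamB y ^ DIM('a) * (1 / (lamB y)\<^sup>2)" for y :: 'a
  have "partial_dir b (\<lambda>y. W y * partial_dir b (\<lambda>y. \<Sum>u\<leftarrow>us. u y) y) x =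
      (\<Sum>u\<leftarrow>us. partial_dir b (\<lambda>y. W y * partial_dir b u y) x)" if b: "b \<in> Basis" for b
  proof -
    have "partial_dir b (\<lambda>y. \<Sum>u\<leftarrow>us. u y) y = (\<Sum>u\<leftarrow>us. partial_dir b u y)" if "y \<in> S" for y
      using partial_dir_sum_list[of us "\<lambda>u. u"] diff b that by simp
    then have "partial_dir b (\<lambda>y. W y * partial_dir b (\<lambda>y. \<Sum>u\<leftarrow>us. u y) y) x =
        partial_dir b (\<lambda>y. \<Sum>u\<leftarrow>us. W y * partial_dir b u y) x"
      by (intro partial_dir_cong_open[OF S]) (simp add: sum_list_const_mult)
    also have "\<dots> = (\<Sum>u\<leftarrow>us. partial_dir b (\<lambda>y. W y * partial_dir b u y) x)"
      using partial_dir_sum_list[of us "\<lambda>u y. W y * partial_dir b u y"] flux_diff b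
      unfolding W_def by simp
    finally show ?thesis .
  qed
  then have "LB (\<lambda>y. \<Sum>u\<leftarrow>us. u y) x =
      1 / lamB x ^ DIM('a) * (\<Sum>b\<in>Basis. \<Sum>u\<leftarrow>us. partial_dir b (\<lambda>y. W y * partial_dir b u y) x)"
    unfolding LB_def W_def by simp
  also have "\<dots> = (\<Sum>u\<leftarrow>us. LB u x)"
    unfolding LB_def W_def
    by (induction us) (simp_all add: sum.distrib distrib_left)
  finally show ?thesis .
qed

lemma Dop_sum_list:
  fixes us :: "('a::euclidean_space \<Rightarrow> real) list"
  assumes "open S" "x \<in> S"
    and "\<And>u b y. u \<in> set us \<Longrightarrow> b \<in> Basis \<Longrightarrow> y \<in> S \<Longrightarrow>
      (\<lambda>t. u (y + t *\<^sub>R b)) field_differentiable (at 0)"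
    and "\<And>u b. u \<in> set us \<Longrightarrow> b \<in> Basis \<Longrightarrow>
      (\<lambda>t. lamB (x + t *\<^sub>R b) ^ DIM('a) * (1 / (lamB (x + t *\<^sub>R b))\<^sup>2)
        * partial_dir b u (x + t *\<^sub>R b)) field_differentiable (at 0)"
  shows "Dop n t (\<lambda>y. \<Sum>u\<leftarrow>us. u y) x = (\<Sum>u\<leftarrow>us. Dop n t u x)"
proof -
  have "(\<Sum>u\<leftarrow>us. Dop n t u x) = - (\<Sum>u\<leftarrow>us. LB u x) - t * (real n - t) * (\<Sum>u\<leftarrow>us. u x)"
    by (induction us) (simp_all add: Dop_def algebra_simps)
  then show ?thesis
    using LB_sum_list[OF assms] by (simp add: Dop_def)
qed

section \<open>Laurent profiles\<close>

definition laurent_profile :: "(real \<Rightarrow> real) \<Rightarrow> bool" where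
  "laurent_profile q \<longleftrightarrow> (\<exists>P i. \<forall>r>0. q r = poly P r / r ^ i)"

lemma laurent_profile_cong:
  "laurent_profile q \<Longrightarrow> (\<And>r. r > 0 \<Longrightarrow> q r = q' r) \<Longrightarrow> laurent_profile q'"
  unfolding laurent_profile_def by metis

lemma laurent_profile_const [intro]: "laurent_profile (\<lambda>r. c)"
  unfolding laurent_profile_def by (intro exI[of _ "[:c:]"] exI[of _ 0]) simp

lemma laurent_profile_ident [intro]: "laurent_profile (\<lambda>r. r)"
  unfolding laurent_profile_def by (intro exI[of _ "[:0, 1:]"] exI[of _ 0]) simp

lemma laurent_profile_add [intro]:
  assumes "laurent_profile f" "laurent_profile g"
  shows "laurent_profile (\<lambda>r. f r + g r)"
proof -
  obtain P i Q j where "\<forall>r>0. f r = poly P r / r ^ i" "\<forall>r>0. g r = poly Q r / r ^ j"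
    using assms unfolding laurent_profile_def by blast
  then have "\<forall>r>0. f r + g r = poly (P * [:0, 1:] ^ j + Q * [:0, 1:] ^ i) r / r ^ (i + j)"
    by (simp add: field_simps power_add)
  then show ?thesis unfolding laurent_profile_def by blast
qed

lemma laurent_profile_mult [intro]:
  assumes "laurent_profile f" "laurent_profile g"
  shows "laurent_profile (\<lambda>r. f r * g r)"
proof -
  obtain P i Q j where "\<forall>r>0. f r = poly P r / r ^ i" "\<forall>r>0. g r = poly Q r / r ^ j"
    using assms unfolding laurent_profile_def by blast
  then have "\<forall>r>0. f r * g r = poly (P * Q) r / r ^ (i + j)"
    by (simp add: power_add)
  then show ?thesis unfolding laurent_profile_def by blast
qed

lemma laurent_profile_minus [intro]: "laurent_profile f \<Longrightarrow> laurent_profile (\<lambda>r. - f r)"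
  using laurent_profile_mult[OF laurent_profile_const[of "-1"]] by simp

lemma laurent_profile_diff [intro]:
  "laurent_profile f \<Longrightarrow> laurent_profile g \<Longrightarrow> laurent_profile (\<lambda>r. f r - g r)"
  using laurent_profile_add[of f "\<lambda>r. - g r"] by auto

lemma laurent_profile_power [intro]: "laurent_profile f \<Longrightarrow> laurent_profile (\<lambda>r. f r ^ k)"
  by (induction k) auto

lemma laurent_profile_divide_const [intro]:
  "laurent_profile f \<Longrightarrow> laurent_profile (\<lambda>r. f r / c)"
  using laurent_profile_mult[OF _ laurent_profile_const[of "1 / c"]] by simp

lemma laurent_profile_divide_monomial [intro]:
  assumes "laurent_profile f"
  shows "laurent_profile (\<lambda>r. f r / (c * r))"
proof -
  obtain P i where "\<forall>r>0. f r = poly P r / r ^ i"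
    using assms unfolding laurent_profile_def by blast
  then have "\<forall>r>0. f r / (c * r) = poly (smult (1 / c) P) r / r ^ Suc i"
    by simp
  then show ?thesis unfolding laurent_profile_def by blast
qed

lemma laurent_profile_divide_ident [intro]:
  "laurent_profile f \<Longrightarrow> laurent_profile (\<lambda>r. f r / r)"
  using laurent_profile_divide_monomial[of f 1] by simp

lemma laurent_profile_has_derivative_in:
  assumes "laurent_profile q"
  obtains q' where "laurent_profile q'" "\<And>r. r > 0 \<Longrightarrow> (q has_real_derivative q' r) (at r)"
proof -
  obtain P i where P: "\<forall>r>0. q r = poly P r / r ^ i"
    using assms unfolding laurent_profile_def by blast
  define Q where "Q = pderiv P * [:0, 1:] - smult (of_nat i) P"
  have "(q has_real_derivative poly Q r / r ^ Suc i) (at r)" if r: "r > 0" for r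
  proof -
    have "((\<lambda>r. poly P r / r ^ i) has_real_derivative
        (poly (pderiv P) r * r ^ i - poly P r * (real i * r ^ (i - 1))) / (r ^ i * r ^ i)) (at r)"
      using r by (auto intro!: derivative_eq_intros)
    moreover have "(poly (pderiv P) r * r ^ i - poly P r * (real i * r ^ (i - 1))) / (r ^ i * r ^ i)
        = poly Q r / r ^ Suc i"
      using r by (cases i) (simp_all add: Q_def field_simps)
    moreover have "\<forall>\<^sub>F s in nhds r. poly P s / s ^ i = q s"
      using eventually_nhds_in_open[of "{0<..}" r] r P by (auto elim!: eventually_mono)
    ultimately show ?thesis
      using DERIV_cong_ev[OF refl _ refl] by metis
  qed
  moreover have "laurent_profile (\<lambda>r. poly Q r / r ^ Suc i)"
    unfolding laurent_profile_def by blast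
  ultimately show ?thesis using that by blast
qed

lemma laurent_profile_has_derivative:
  "laurent_profile q \<Longrightarrow> r > 0 \<Longrightarrow> (q has_real_derivative deriv q r) (at r)"
  by (metis DERIV_imp_deriv laurent_profile_has_derivative_in)

lemma laurent_profile_deriv [intro]: "laurent_profile q \<Longrightarrow> laurent_profile (deriv q)"
  by (metis DERIV_imp_deriv laurent_profile_cong laurent_profile_has_derivative_in)

lemma laurent_profile_isCont: "laurent_profile q \<Longrightarrow> r > 0 \<Longrightarrow> isCont q r"
  using DERIV_isCont laurent_profile_has_derivative by blast

section \<open>The operator \<open>D\<^sub>t\<close> on \<open>\<rho>\<^sup>a q(r) G\<close>\<close>

definition rho_radial :: "real \<Rightarrow> real" where
  "rho_radial r = 2 * (1 - r) / (1 + r)"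

definition lam_radial :: "real \<Rightarrow> real" where
  "lam_radial r = 2 / (1 - r\<^sup>2)"

lemma rhoB_eq_rho_radial: "rhoB x = rho_radial (norm x)"
  by (simp add: rhoB_def rho_radial_def)

lemma lamB_eq_lam_radial: "lamB x = lam_radial (norm x)"
  by (simp add: lamB_def lam_radial_def)

lemma rho_radial_pos: "0 \<le> r \<Longrightarrow> r < 1 \<Longrightarrow> rho_radial r > 0"
  by (simp add: rho_radial_def)

lemma one_minus_square_pos: "0 \<le> r \<Longrightarrow> r < 1 \<Longrightarrow> 1 - r\<^sup>2 > (0::real)"
  by (simp add: abs_square_less_1)

lemma rho_radial_has_derivative:
  "r > -1 \<Longrightarrow> (rho_radial has_real_derivative -4 / (1 + r)\<^sup>2) (at r)"
  unfolding rho_radial_def[abs_def]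
  by (auto intro!: derivative_eq_intros simp: field_simps power2_eq_square)

lemma rho_powr_mult_has_derivative:
  assumes "(g has_real_derivative g') (at r)" "0 \<le> r" "r < 1"
  shows "((\<lambda>s. rho_radial s powr a * g s) has_real_derivative
           rho_radial r powr a * (g' - 2 * a * g r / (1 - r\<^sup>2))) (at r)"
proof -
  have \<rho>: "rho_radial r > 0" by (rule rho_radial_pos[OF assms(2,3)])
  have "((\<lambda>s. rho_radial s powr a) has_real_derivative
      a * rho_radial r powr (a - 1) * (-4 / (1 + r)\<^sup>2)) (at r)"
    using DERIV_fun_powr[OF rho_radial_has_derivative \<rho>] assms by simp
  moreover have "a * rho_radial r powr (a - 1) * (-4 / (1 + r)\<^sup>2) =
      rho_radial r powr a * (- 2 * a / (1 - r\<^sup>2))"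
  proof -
    define R where "R = rho_radial r powr a"
    have "rho_radial r powr (a - 1) = R / rho_radial r"
      using \<rho> by (simp add: R_def powr_diff)
    moreover have "a * (R / rho_radial r) * (-4 / (1 + r)\<^sup>2) = R * (- 2 * a / (1 - r\<^sup>2))"
    proof -
      define p q where "p = 1 - r" and "q = 1 + r"
      have "p \<noteq> 0" "q \<noteq> 0" using assms(2,3) by (auto simp: p_def q_def)
      moreover have "rho_radial r = 2 * p / q" "1 - r\<^sup>2 = p * q" "(1 + r)\<^sup>2 = q * q"
        by (auto simp: rho_radial_def p_def q_def power2_eq_square algebra_simps)
      ultimately show ?thesis by (simp add: field_simps)
    qed
    ultimately show ?thesis unfolding R_def by simp
  qed
  ultimately show ?thesis
    using DERIV_mult[OF _ assms(1)] by (fastforce simp: algebra_simps)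
qed

lemma lam_radial_has_derivative:
  assumes "0 \<le> r" "r < 1"
  shows "(lam_radial has_real_derivative r * (lam_radial r)\<^sup>2) (at r)"
proof -
  have "1 - r\<^sup>2 \<noteq> 0" using one_minus_square_pos[OF assms] by simp
  then show ?thesis
    unfolding lam_radial_def[abs_def]
    by (auto intro!: derivative_eq_intros simp: field_simps power2_eq_square)
qed

lemma lam_radial_weight_has_derivative:
  assumes "0 \<le> r" "r < 1"
  shows "((\<lambda>s. lam_radial s ^ N * (1 / (lam_radial s)\<^sup>2)) has_real_derivative
           (real N - 2) * r * lam_radial r ^ N / lam_radial r) (at r)"
proof -
  have \<lambda>: "lam_radial r \<noteq> 0"
    using one_minus_square_pos[OF assms] by (simp add: lam_radial_def)
  have "real N * lam_radial r ^ (N - 1) = real N * lam_radial r ^ N / lam_radial r"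
    using \<lambda> by (cases N) simp_all
  with \<lambda> show ?thesis
    by (auto intro!: derivative_eq_intros lam_radial_has_derivative[OF assms]
        simp: field_simps power2_eq_square)
qed

lemma smooth_on_subset: "smooth_on T u \<Longrightarrow> S \<subseteq> T \<Longrightarrow> smooth_on S u"
  unfolding smooth_on_def by (blast intro: continuous_on_subset)

lemma LB_radial_mult:
  fixes x :: "'a::euclidean_space"
  assumes G: "smooth_on (- {0}) G" and x: "x \<in> ball 0 1 - {0}" and r: "norm x = r"
    and \<phi>: "\<forall>s\<in>{0<..<1}. (\<phi> has_real_derivative \<phi>1 s) (at s)"
    and \<phi>1: "(\<phi>1 has_real_derivative \<phi>2) (at r)"
  shows "LB (\<lambda>y. \<phi> (norm y) * G y) x =
      ((real DIM('a) - 2) * r * (1 - r\<^sup>2) / 2 * \<phi>1 r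
        + (1 - r\<^sup>2)\<^sup>2 / 4 * (\<phi>2 + (real DIM('a) - 1) * \<phi>1 r / r)) * G x
      + ((real DIM('a) - 2) * (1 - r\<^sup>2) / 2 * \<phi> r + (1 - r\<^sup>2)\<^sup>2 / (2 * r) * \<phi>1 r) * euler_op G x
      + (1 - r\<^sup>2)\<^sup>2 / 4 * \<phi> r * flat_laplacian G x"
    and "b \<in> Basis \<Longrightarrow> (\<lambda>t. lamB (x + t *\<^sub>R b) ^ DIM('a) * (1 / (lamB (x + t *\<^sub>R b))\<^sup>2)
        * partial_dir b (\<lambda>y. \<phi> (norm y) * G y) (x + t *\<^sub>R b)) field_differentiable (at 0)"
proof -
  let ?S = "ball (0::'a) 1 - {0}"
  let ?N = "DIM('a)"
  let ?\<Psi> = "\<lambda>s. lam_radial s ^ ?N * (1 / (lam_radial s)\<^sup>2)"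
  let ?\<Psi>1 = "(real ?N - 2) * r * lam_radial r ^ ?N / lam_radial r"
  have r01: "0 < r" "r < 1" using x r by auto
  have S: "open ?S" "x \<in> ?S" "0 \<notin> ?S" using x by auto
  have GS: "smooth_on ?S G" using smooth_on_subset[OF G] by blast
  have \<phi>S: "(\<phi> has_real_derivative \<phi>1 (norm y)) (at (norm y))" if "y \<in> ?S" for y
    using \<phi> that by auto
  have \<Psi>: "(?\<Psi> has_real_derivative ?\<Psi>1) (at r)"
    using lam_radial_weight_has_derivative r01 by simp
  note flux = radial_flux_has_line_derivative[OF S _ GS \<phi>S \<phi>1 \<Psi> r]
  show "b \<in> Basis \<Longrightarrow> (\<lambda>t. lamB (x + t *\<^sub>R b) ^ ?N * (1 / (lamB (x + t *\<^sub>R b))\<^sup>2)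
        * partial_dir b (\<lambda>y. \<phi> (norm y) * G y) (x + t *\<^sub>R b)) field_differentiable (at 0)"
    using flux unfolding lamB_eq_lam_radial field_differentiable_def by blast
  have w: "1 - r\<^sup>2 \<noteq> 0" using one_minus_square_pos[of r] r01 by simp
  then have \<lambda>: "lam_radial r \<noteq> 0" by (simp add: lam_radial_def)
  have \<Psi>_eq: "?\<Psi> r = lam_radial r ^ ?N * ((1 - r\<^sup>2)\<^sup>2 / 4)"
    and \<Psi>1_eq: "?\<Psi>1 = lam_radial r ^ ?N * ((real ?N - 2) * r * (1 - r\<^sup>2) / 2)"
    using \<lambda> by (simp_all add: lam_radial_def power_divide)
  have "LB (\<lambda>y. \<phi> (norm y) * G y) x = 1 / lam_radial r ^ ?N *
      (\<Sum>b\<in>Basis. partial_dir b (\<lambda>y. ?\<Psi> (norm y) * partial_dir b (\<lambda>y. \<phi> (norm y) * G y) y) x)"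
    unfolding LB_def lamB_eq_lam_radial r ..
  also have "\<dots> = 1 / lam_radial r ^ ?N *
      ((?\<Psi>1 * \<phi>1 r + ?\<Psi> r * (\<phi>2 + (real ?N - 1) * \<phi>1 r / r)) * G x
      + (?\<Psi>1 * \<phi> r + 2 * ?\<Psi> r * \<phi>1 r) / r * euler_op G x + ?\<Psi> r * \<phi> r * flat_laplacian G x)"
    using radial_divergence[OF S GS \<phi>S \<phi>1 \<Psi> r] by simp
  also have "\<dots> =
      ((real ?N - 2) * r * (1 - r\<^sup>2) / 2 * \<phi>1 r
        + (1 - r\<^sup>2)\<^sup>2 / 4 * (\<phi>2 + (real ?N - 1) * \<phi>1 r / r)) * G x
      + ((real ?N - 2) * (1 - r\<^sup>2) / 2 * \<phi> r + (1 - r\<^sup>2)\<^sup>2 / (2 * r) * \<phi>1 r) * euler_op G x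
      + (1 - r\<^sup>2)\<^sup>2 / 4 * \<phi> r * flat_laplacian G x"
    unfolding \<Psi>_eq \<Psi>1_eq using \<lambda> r01 by (simp add: field_simps)
  finally show "LB (\<lambda>y. \<phi> (norm y) * G y) x = \<dots>" .
qed

text \<open>At the sphere \<open>D\<^sub>t \<rho>\<^sup>a = indicial n a t \<cdot> \<rho>\<^sup>a + O(\<rho>\<^sup>a\<^sup>+\<^sup>1)\<close>.\<close>

definition indicial :: "nat \<Rightarrow> real \<Rightarrow> real \<Rightarrow> real" where
  "indicial n a t = (a - t) * (real n - a - t)"

text \<open>The coefficients of \<open>G\<close>, \<open>euler_op G\<close> and \<open>flat_laplacian G\<close> in
  \<open>\<rho>\<^sup>-\<^sup>a D\<^sub>t (\<rho>\<^sup>a q(r) G)\<close>.\<close>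

definition D_coeff_id :: "real \<Rightarrow> real \<Rightarrow> nat \<Rightarrow> (real \<Rightarrow> real) \<Rightarrow> real \<Rightarrow> real" where
  "D_coeff_id a t n q r = - ((1 - r\<^sup>2)\<^sup>2 / 4 * deriv (deriv q) r
      + ((real n - 1) * r * (1 - r\<^sup>2) / 2 + real n * (1 - r\<^sup>2)\<^sup>2 / (4 * r) - a * (1 - r\<^sup>2)) * deriv q r
      + (a\<^sup>2 - a * real n * r - a * real n * (1 - r\<^sup>2) / (2 * r)) * q r) - t * (real n - t) * q r"

definition D_coeff_euler :: "real \<Rightarrow> nat \<Rightarrow> (real \<Rightarrow> real) \<Rightarrow> real \<Rightarrow> real" where
  "D_coeff_euler a n q r = - ((1 - r\<^sup>2)\<^sup>2 / (2 * r) * deriv q r - a * (1 - r\<^sup>2) / r * q r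
      + (real n - 1) * (1 - r\<^sup>2) / 2 * q r)"

definition D_coeff_lap :: "(real \<Rightarrow> real) \<Rightarrow> real \<Rightarrow> real" where
  "D_coeff_lap q r = - ((1 - r\<^sup>2)\<^sup>2 / 4 * q r)"

lemma laurent_profile_D_coeffs:
  assumes "laurent_profile q"
  shows "laurent_profile (D_coeff_id a t n q)" "laurent_profile (D_coeff_euler a n q)"
    "laurent_profile (D_coeff_lap q)"
  unfolding D_coeff_id_def[abs_def] D_coeff_euler_def[abs_def] D_coeff_lap_def[abs_def]
  by (intro laurent_profile_add laurent_profile_mult laurent_profile_diff laurent_profile_minus
      laurent_profile_power laurent_profile_divide_const laurent_profile_divide_monomial
      laurent_profile_divide_ident laurent_profile_deriv laurent_profile_const
      laurent_profile_ident assms)+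

lemma D_coeffs_at_1:
  "D_coeff_id a t n q 1 = indicial n a t * q 1" "D_coeff_euler a n q 1 = 0" "D_coeff_lap q 1 = 0"
  by (simp_all add: D_coeff_id_def D_coeff_euler_def D_coeff_lap_def indicial_def algebra_simps
      power2_eq_square)

lemma rho_powr_laurent_has_derivatives:
  assumes q: "laurent_profile q" and r: "0 < r" "r < 1"
  shows "((\<lambda>s. rho_radial s powr a * q s) has_real_derivative
      rho_radial r powr a * (deriv q r - 2 * a * q r / (1 - r\<^sup>2))) (at r)"
    and "((\<lambda>s. rho_radial s powr a * (deriv q s - 2 * a * q s / (1 - s\<^sup>2))) has_real_derivative
      rho_radial r powr a * (deriv (deriv q) r - 2 * a * (deriv q r * (1 - r\<^sup>2) + 2 * r * q r) / (1 - r\<^sup>2)\<^sup>2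
        - 2 * a * (deriv q r - 2 * a * q r / (1 - r\<^sup>2)) / (1 - r\<^sup>2))) (at r)"
proof -
  show "((\<lambda>s. rho_radial s powr a * q s) has_real_derivative
      rho_radial r powr a * (deriv q r - 2 * a * q r / (1 - r\<^sup>2))) (at r)"
    using rho_powr_mult_has_derivative[OF laurent_profile_has_derivative[OF q]] r by simp
  have "1 - r\<^sup>2 \<noteq> 0" using one_minus_square_pos[of r] r by simp
  then have "((\<lambda>s. deriv q s - 2 * a * q s / (1 - s\<^sup>2)) has_real_derivative
      deriv (deriv q) r - 2 * a * (deriv q r * (1 - r\<^sup>2) + 2 * r * q r) / (1 - r\<^sup>2)\<^sup>2) (at r)"
    using r by (auto intro!: derivative_eq_intros laurent_profile_has_derivative q
        simp: field_simps power2_eq_square)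
  from rho_powr_mult_has_derivative[OF this] r
  show "((\<lambda>s. rho_radial s powr a * (deriv q s - 2 * a * q s / (1 - s\<^sup>2))) has_real_derivative
      rho_radial r powr a * (deriv (deriv q) r - 2 * a * (deriv q r * (1 - r\<^sup>2) + 2 * r * q r) / (1 - r\<^sup>2)\<^sup>2
        - 2 * a * (deriv q r - 2 * a * q r / (1 - r\<^sup>2)) / (1 - r\<^sup>2))) (at r)"
    by simp
qed

lemma D_coeffs_eq:
  fixes q :: "real \<Rightarrow> real" and a r :: real
  assumes "0 < r" "r < 1"
  defines "g1 \<equiv> deriv q r - 2 * a * q r / (1 - r\<^sup>2)"
    and "g2 \<equiv> deriv (deriv q) r - 2 * a * (deriv q r * (1 - r\<^sup>2) + 2 * r * q r) / (1 - r\<^sup>2)\<^sup>2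
      - 2 * a * (deriv q r - 2 * a * q r / (1 - r\<^sup>2)) / (1 - r\<^sup>2)"
  shows "D_coeff_id a t n q r = - ((real n - 1) * r * (1 - r\<^sup>2) / 2 * g1
      + (1 - r\<^sup>2)\<^sup>2 / 4 * (g2 + real n * g1 / r)) - t * (real n - t) * q r"
    and "D_coeff_euler a n q r = - ((real n - 1) * (1 - r\<^sup>2) / 2 * q r + (1 - r\<^sup>2)\<^sup>2 / (2 * r) * g1)"
    and "D_coeff_lap q r = - ((1 - r\<^sup>2)\<^sup>2 / 4 * q r)"
proof -
  define v where "v = 1 - r\<^sup>2"
  have "v \<noteq> 0" "r \<noteq> 0" using one_minus_square_pos[of r] assms(1,2) by (auto simp: v_def)
  then show "D_coeff_id a t n q r = - ((real n - 1) * r * (1 - r\<^sup>2) / 2 * g1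
      + (1 - r\<^sup>2)\<^sup>2 / 4 * (g2 + real n * g1 / r)) - t * (real n - t) * q r"
    and "D_coeff_euler a n q r = - ((real n - 1) * (1 - r\<^sup>2) / 2 * q r + (1 - r\<^sup>2)\<^sup>2 / (2 * r) * g1)"
    unfolding g1_def g2_def D_coeff_id_def D_coeff_euler_def v_def[symmetric]
    by (simp_all add: field_simps power2_eq_square)
qed (simp add: D_coeff_lap_def)

lemma Dop_rho_powr_radial_mult:
  fixes x :: "'a::euclidean_space"
  assumes n: "DIM('a) = n + 1" and q: "laurent_profile q" and G: "smooth_on (- {0}) G"
    and x: "x \<in> ball 0 1 - {0}"
  shows "Dop n t (\<lambda>y. rho_radial (norm y) powr a * q (norm y) * G y) x =
      rho_radial (norm x) powr a * (D_coeff_id a t n q (norm x) * G x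
        + D_coeff_euler a n q (norm x) * euler_op G x + D_coeff_lap q (norm x) * flat_laplacian G x)"
    and "b \<in> Basis \<Longrightarrow> (\<lambda>t. lamB (x + t *\<^sub>R b) ^ DIM('a) * (1 / (lamB (x + t *\<^sub>R b))\<^sup>2)
        * partial_dir b (\<lambda>y. rho_radial (norm y) powr a * q (norm y) * G y) (x + t *\<^sub>R b))
        field_differentiable (at 0)"
    and "b \<in> Basis \<Longrightarrow> (\<lambda>t. rho_radial (norm (x + t *\<^sub>R b)) powr a * q (norm (x + t *\<^sub>R b))
        * G (x + t *\<^sub>R b)) field_differentiable (at 0)"
proof -
  define r where "r = norm x"
  have r01: "0 < r" "r < 1" using x by (auto simp: r_def)
  have \<phi>: "\<forall>s\<in>{0<..<1}. ((\<lambda>s. rho_radial s powr a * q s) has_real_derivative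
      rho_radial s powr a * (deriv q s - 2 * a * q s / (1 - s\<^sup>2))) (at s)"
    using rho_powr_laurent_has_derivatives(1)[OF q] by simp
  note \<phi>1 = rho_powr_laurent_has_derivatives(2)[OF q r01, where a=a]
  note LB = LB_radial_mult[OF G x r_def[symmetric] \<phi> \<phi>1]
  show "b \<in> Basis \<Longrightarrow> (\<lambda>t. lamB (x + t *\<^sub>R b) ^ DIM('a) * (1 / (lamB (x + t *\<^sub>R b))\<^sup>2)
      * partial_dir b (\<lambda>y. rho_radial (norm y) powr a * q (norm y) * G y) (x + t *\<^sub>R b))
      field_differentiable (at 0)"
    using LB(2) by (simp add: mult.assoc)
  show "b \<in> Basis \<Longrightarrow> (\<lambda>t. rho_radial (norm (x + t *\<^sub>R b)) powr a * q (norm (x + t *\<^sub>R b))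
      * G (x + t *\<^sub>R b)) field_differentiable (at 0)"
    using radial_mult_has_line_derivative[OF _ bspec[OF \<phi>] smooth_on_has_line_derivative[OF G]] x r01
    unfolding field_differentiable_def r_def by fastforce
  show "Dop n t (\<lambda>y. rho_radial (norm y) powr a * q (norm y) * G y) x =
      rho_radial (norm x) powr a * (D_coeff_id a t n q (norm x) * G x
        + D_coeff_euler a n q (norm x) * euler_op G x + D_coeff_lap q (norm x) * flat_laplacian G x)"
  proof -
    define g1 where "g1 = deriv q r - 2 * a * q r / (1 - r\<^sup>2)"
    define g2 where "g2 = deriv (deriv q) r - 2 * a * (deriv q r * (1 - r\<^sup>2) + 2 * r * q r) / (1 - r\<^sup>2)\<^sup>2
      - 2 * a * g1 / (1 - r\<^sup>2)"
    have r0: "r \<noteq> 0" using r01 by simp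
    have "Dop n t (\<lambda>y. rho_radial (norm y) powr a * q (norm y) * G y) x =
        - LB (\<lambda>y. rho_radial (norm y) powr a * q (norm y) * G y) x
        - t * (real n - t) * (rho_radial r powr a * q r * G x)"
      by (simp add: Dop_def r_def)
    also have "\<dots> = rho_radial r powr a * (D_coeff_id a t n q r * G x
        + D_coeff_euler a n q r * euler_op G x + D_coeff_lap q r * flat_laplacian G x)"
      unfolding LB(1) D_coeffs_eq[OF r01] g1_def[symmetric] g2_def[symmetric]
      using r0 by (simp add: n field_simps)
    finally show ?thesis unfolding r_def .
  qed
qed

section \<open>Radial expansions and their boundary behaviour\<close>

definition radial_expansion :: "((real \<Rightarrow> real) \<times> ('a::real_normed_vector \<Rightarrow> real)) list \<Rightarrow> 'a \<Rightarrow> real"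
  where "radial_expansion L y = (\<Sum>(q, G)\<leftarrow>L. q (norm y) * G y)"

definition admissible_expansion :: "((real \<Rightarrow> real) \<times> ('a::euclidean_space \<Rightarrow> real)) list \<Rightarrow> bool"
  where "admissible_expansion L \<longleftrightarrow> (\<forall>(q, G)\<in>set L. laurent_profile q \<and> smooth_on (- {0}) G)"

definition D_expansion :: "real \<Rightarrow> real \<Rightarrow> nat \<Rightarrow> ((real \<Rightarrow> real) \<times> ('a::euclidean_space \<Rightarrow> real)) list
    \<Rightarrow> ((real \<Rightarrow> real) \<times> ('a \<Rightarrow> real)) list" where
  "D_expansion a t n L = concat (map (\<lambda>(q, G).
     [(D_coeff_id a t n q, G), (D_coeff_euler a n q, euler_op G), (D_coeff_lap q, flat_laplacian G)]) L)"

lemma admissible_D_expansion: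
  "admissible_expansion L \<Longrightarrow> admissible_expansion (D_expansion a t n L)"
  unfolding admissible_expansion_def D_expansion_def
  by (auto simp: laurent_profile_D_coeffs open_Compl
      intro!: smooth_on_euler_op smooth_on_flat_laplacian)

lemma Dop_cong_open:
  assumes "open S" "x \<in> S" "\<And>y. y \<in> S \<Longrightarrow> u y = v y"
  shows "Dop n t u x = Dop n t v x"
  using LB_cong_open[OF assms] assms(2,3) by (simp add: Dop_def)

lemma Dop_rho_powr_expansion:
  fixes u :: "'a::euclidean_space \<Rightarrow> real"
  assumes n: "DIM('a) = n + 1" and L: "admissible_expansion L"
    and u: "\<And>y. y \<in> ball 0 1 - {0} \<Longrightarrow> u y = rho_radial (norm y) powr a * radial_expansion L y"
    and x: "x \<in> ball 0 1 - {0}"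
  shows "Dop n t u x = rho_radial (norm x) powr a * radial_expansion (D_expansion a t n L) x"
proof -
  define summand where "summand = (\<lambda>(q, G) y. rho_radial (norm y) powr a * q (norm y) * G (y::'a))"
  let ?S = "ball (0::'a) 1 - {0}"
  have S: "open ?S" by auto
  have L': "laurent_profile q" "smooth_on (- {0}) G" if "(q, G) \<in> set L" for q G
    using L that unfolding admissible_expansion_def by auto
  note term_facts = Dop_rho_powr_radial_mult[OF n L']
  have "u y = (\<Sum>v\<leftarrow>map summand L. v y)" if "y \<in> ?S" for y
    using u[OF that] by (simp add: radial_expansion_def summand_def case_prod_beta o_def
        sum_list_const_mult[symmetric] mult.assoc)
  then have "Dop n t u x = Dop n t (\<lambda>y. \<Sum>v\<leftarrow>map summand L. v y) x"
    by (rule Dop_cong_open[OF S x])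
  also have "\<dots> = (\<Sum>v\<leftarrow>map summand L. Dop n t v x)"
  proof (rule Dop_sum_list[OF S x])
    fix v and b y :: 'a
    assume "v \<in> set (map summand L)" "b \<in> Basis" "y \<in> ?S"
    then show "(\<lambda>t. v (y + t *\<^sub>R b)) field_differentiable (at 0)"
      using term_facts(3) by (auto simp: summand_def)
  next
    fix v and b :: 'a
    assume "v \<in> set (map summand L)" "b \<in> Basis"
    then show "(\<lambda>t. lamB (x + t *\<^sub>R b) ^ DIM('a) * (1 / (lamB (x + t *\<^sub>R b))\<^sup>2)
        * partial_dir b v (x + t *\<^sub>R b)) field_differentiable (at 0)"
      using term_facts(2)[OF _ _ x] by (auto simp: summand_def)
  qed
  also have "\<dots> = (\<Sum>(q, G)\<leftarrow>L. rho_radial (norm x) powr a * (D_coeff_id a t n q (norm x) * G x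
      + D_coeff_euler a n q (norm x) * euler_op G x + D_coeff_lap q (norm x) * flat_laplacian G x))"
    by (auto simp: summand_def term_facts(1)[OF _ _ x] intro!: arg_cong[where f=sum_list] map_cong)
  also have "\<dots> = rho_radial (norm x) powr a * radial_expansion (D_expansion a t n L) x"
    by (induction L) (auto simp: D_expansion_def radial_expansion_def algebra_simps)
  finally show ?thesis .
qed

definition has_boundary_term :: "real \<Rightarrow> ('a::euclidean_space \<Rightarrow> real) \<Rightarrow> real \<Rightarrow> ('a \<Rightarrow> real) \<Rightarrow> bool"
  where "has_boundary_term a u c F \<longleftrightarrow> (\<exists>q L. admissible_expansion ((q, F) # L) \<and> q 1 = c
     \<and> (\<forall>(p, G)\<in>set L. p 1 = 0)
     \<and> (\<forall>y\<in>ball 0 1 - {0}. u y = rho_radial (norm y) powr a * radial_expansion ((q, F) # L) y))"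

lemma has_boundary_term_rho_powr:
  assumes "smooth_on (- {0}) F" "\<And>y. y \<in> ball 0 1 - {0} \<Longrightarrow> u y = rhoB y powr a * F y"
  shows "has_boundary_term a u 1 F"
  unfolding has_boundary_term_def
  by (intro exI[of _ "\<lambda>r. 1"] exI[of _ "[]"])
     (use assms in \<open>auto simp: admissible_expansion_def radial_expansion_def rhoB_eq_rho_radial\<close>)

lemma has_boundary_term_Dop:
  assumes "has_boundary_term a u c F" "DIM('a) = n + 1"
  shows "has_boundary_term a (Dop n t u) (indicial n a t * c) (F :: 'a::euclidean_space \<Rightarrow> real)"
proof -
  obtain q L where L: "admissible_expansion ((q, F) # L)" and c: "q 1 = c"
    and vanish: "\<forall>(p, G)\<in>set L. p 1 = 0"
    and u: "\<forall>y\<in>ball 0 1 - {0}. u y = rho_radial (norm y) powr a * radial_expansion ((q, F) # L) y"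
    using assms(1) unfolding has_boundary_term_def by blast
  define L' where "L' = (D_coeff_euler a n q, euler_op F) # (D_coeff_lap q, flat_laplacian F)
    # D_expansion a t n L"
  have D: "D_expansion a t n ((q, F) # L) = (D_coeff_id a t n q, F) # L'"
    by (simp add: D_expansion_def L'_def)
  show ?thesis
    unfolding has_boundary_term_def
  proof (intro exI conjI)
    show "admissible_expansion ((D_coeff_id a t n q, F) # L')"
      using admissible_D_expansion[OF L, of a t n] unfolding D .
    show "D_coeff_id a t n q 1 = indicial n a t * c"
      using c by (simp add: D_coeffs_at_1)
    show "\<forall>(p, G)\<in>set L'. p 1 = 0"
      using vanish by (force simp: L'_def D_expansion_def D_coeffs_at_1)
    show "\<forall>y\<in>ball 0 1 - {0}. Dop n t u y =
        rho_radial (norm y) powr a * radial_expansion ((D_coeff_id a t n q, F) # L') y"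
    proof
      fix y :: 'a
      assume y: "y \<in> ball 0 1 - {0}"
      have "Dop n t u y = rho_radial (norm y) powr a * radial_expansion (D_expansion a t n ((q, F) # L)) y"
        by (rule Dop_rho_powr_expansion[OF assms(2) L]) (use u y in auto)
      then show "Dop n t u y = rho_radial (norm y) powr a * radial_expansion ((D_coeff_id a t n q, F) # L') y"
        unfolding D .
    qed
  qed
qed

lemma has_boundary_term_Dprod:
  assumes "has_boundary_term a u c F" "DIM('a) = n + 1"
  shows "has_boundary_term a (Dprod n ts u) (c * (\<Prod>t\<leftarrow>ts. indicial n a t))
    (F :: 'a::euclidean_space \<Rightarrow> real)"
proof (induction ts)
  case Nil
  then show ?case using assms(1) by (simp add: Dprod_def)
next
  case (Cons t ts)
  have "Dprod n (t # ts) u = Dop n t (Dprod n ts u)" by (simp add: Dprod_def)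
  then show ?case using has_boundary_term_Dop[OF Cons assms(2), of t] by (simp add: mult_ac)
qed

lemma tendsto_smooth_on_punctured:
  assumes "smooth_on (- {0}) G" "\<theta> \<noteq> 0"
  shows "(G \<longlongrightarrow> G \<theta>) (at \<theta> within S)"
proof -
  have "isCont G \<theta>"
    using smooth_onD(1)[OF assms(1)] assms(2)
    by (auto simp: continuous_on_eq_continuous_at open_Compl)
  then show ?thesis
    using continuous_at_imp_continuous_at_within continuous_within by blast
qed

lemma tendsto_radial_expansion:
  assumes "admissible_expansion L" "norm \<theta> = 1"
  shows "(radial_expansion L \<longlongrightarrow> (\<Sum>(q, G)\<leftarrow>L. q 1 * G \<theta>)) (at \<theta> within S)"
  using assms(1)
proof (induction L)
  case Nil
  then show ?case by (simp add: radial_expansion_def)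
next
  case (Cons p L)
  obtain q G where p: "p = (q, G)" by fastforce
  have q: "laurent_profile q" and G: "smooth_on (- {0}) G"
    using Cons.prems p by (auto simp: admissible_expansion_def)
  have "(G \<longlongrightarrow> G \<theta>) (at \<theta> within S)"
    by (rule tendsto_smooth_on_punctured[OF G]) (use assms(2) in auto)
  moreover have "isCont q (norm \<theta>)"
    using laurent_profile_isCont[OF q] assms(2) by simp
  then have "((\<lambda>x. q (norm x)) \<longlongrightarrow> q 1) (at \<theta> within S)"
    using isCont_tendsto_compose[OF _ tendsto_norm[OF tendsto_ident_at]] assms(2) by fastforce
  moreover have "(radial_expansion L \<longlongrightarrow> (\<Sum>(q, G)\<leftarrow>L. q 1 * G \<theta>)) (at \<theta> within S)"
    using Cons by (auto simp: admissible_expansion_def)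
  moreover have "radial_expansion ((q, G) # L) = (\<lambda>x. q (norm x) * G x + radial_expansion L x)"
    by (simp add: radial_expansion_def[abs_def])
  ultimately show ?case
    unfolding p by (simp add: tendsto_add tendsto_mult)
qed

lemma eventually_at_sphere_within_ball:
  assumes "norm (\<theta>::'a::euclidean_space) = 1"
  shows "\<forall>\<^sub>F x in at \<theta> within ball 0 1. x \<in> ball 0 1 - {0} \<and> rhoB x > 0"
proof -
  have "x \<in> ball 0 1 - {0} \<and> rhoB x > 0" if "x \<in> ball 0 1" "dist x \<theta> < 1" for x :: 'a
    using that assms by (auto simp: rhoB_def dist_norm intro!: divide_pos_pos add_pos_nonneg)
  then show ?thesis
    unfolding eventually_at by (intro exI[of _ 1]) auto
qed

lemma tendsto_rhoB_sphere:
  assumes "norm (\<theta>::'a::euclidean_space) = 1"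
  shows "(rhoB \<longlongrightarrow> 0) (at \<theta> within S)"
proof -
  have "((\<lambda>x. 2 * (1 - norm x) / (1 + norm x)) \<longlongrightarrow> 2 * (1 - norm \<theta>) / (1 + norm \<theta>)) (at \<theta> within S)"
    by (intro tendsto_intros) (simp add: add_pos_nonneg[of 1, THEN less_imp_neq, symmetric])
  then show ?thesis using assms by (simp add: rhoB_def[abs_def])
qed

lemma has_boundary_term_tendsto:
  assumes "has_boundary_term a u c F" "norm \<theta> = 1"
  obtains E where "(E \<longlongrightarrow> c * F \<theta>) (at \<theta> within ball 0 1)"
    and "\<And>y. y \<in> ball 0 1 - {0} \<Longrightarrow> u y = rhoB y powr a * E y"
proof -
  obtain q L where L: "admissible_expansion ((q, F) # L)" and c: "q 1 = c"
    and vanish: "\<forall>(p, G)\<in>set L. p 1 = 0"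
    and u: "\<forall>y\<in>ball 0 1 - {0}. u y = rho_radial (norm y) powr a * radial_expansion ((q, F) # L) y"
    using assms(1) unfolding has_boundary_term_def by blast
  have "(\<Sum>(p, G)\<leftarrow>L. p 1 * G \<theta>) = 0"
    using vanish by (induction L) auto
  then have "(radial_expansion ((q, F) # L) \<longlongrightarrow> c * F \<theta>) (at \<theta> within ball 0 1)"
    using tendsto_radial_expansion[OF L assms(2)] c by simp
  then show ?thesis using that u by (simp add: rhoB_eq_rho_radial)
qed

lemma tendsto_has_boundary_term:
  assumes "has_boundary_term a u c F" "norm \<theta> = 1"
  shows "((\<lambda>x. rhoB x powr (- a) * u x) \<longlongrightarrow> c * F \<theta>) (at \<theta> within ball 0 1)"
proof -
  obtain E where E: "(E \<longlongrightarrow> c * F \<theta>) (at \<theta> within ball 0 1)"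
    and u: "\<And>y. y \<in> ball 0 1 - {0} \<Longrightarrow> u y = rhoB y powr a * E y"
    using has_boundary_term_tendsto[OF assms] by blast
  have "\<forall>\<^sub>F x in at \<theta> within ball 0 1. E x = rhoB x powr (- a) * u x"
    using eventually_at_sphere_within_ball[OF assms(2)]
    by eventually_elim (simp add: u powr_add[symmetric])
  then show ?thesis using E by (rule Lim_transform_eventually[rotated])
qed

lemma tendsto_has_boundary_term_higher:
  assumes "has_boundary_term (a + k) u c F" "k > 0" "norm \<theta> = 1"
  shows "((\<lambda>x. rhoB x powr (- a) * u x) \<longlongrightarrow> 0) (at \<theta> within ball 0 1)"
proof -
  obtain E where E: "(E \<longlongrightarrow> c * F \<theta>) (at \<theta> within ball 0 1)"
    and u: "\<And>y. y \<in> ball 0 1 - {0} \<Longrightarrow> u y = rhoB y powr (a + k) * E y"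
    using has_boundary_term_tendsto[OF assms(1,3)] by blast
  have ev: "\<forall>\<^sub>F x in at \<theta> within ball 0 1. rhoB x powr k * E x = rhoB x powr (- a) * u x"
    using eventually_at_sphere_within_ball[OF assms(3)]
    by eventually_elim (simp add: u powr_add[symmetric])
  have "((\<lambda>x. rhoB x powr k) \<longlongrightarrow> 0) (at \<theta> within ball 0 1)"
    using eventually_at_sphere_within_ball[OF assms(3)]
    by (intro tendsto_zero_powrI[OF tendsto_rhoB_sphere[OF assms(3)] tendsto_const _ assms(2)])
       (auto elim: eventually_mono)
  from tendsto_mult[OF this E] show ?thesis
    using Lim_transform_eventually[OF _ ev] by simp
qed

lemma tendsto_rho_powr_Dprod:
  fixes F :: "'a::euclidean_space \<Rightarrow> real"
  assumes "DIM('a) = n + 1" "smooth_on (- {0}) F" "norm \<theta> = 1"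
    and "\<And>y. y \<in> ball 0 1 - {0} \<Longrightarrow> V y = rhoB y powr a * F y"
  shows "((\<lambda>x. rhoB x powr (- a) * Dprod n ts V x) \<longlongrightarrow> (\<Prod>t\<leftarrow>ts. indicial n a t) * F \<theta>)
    (at \<theta> within ball 0 1)"
  using tendsto_has_boundary_term[OF has_boundary_term_Dprod[OF
        has_boundary_term_rho_powr[OF assms(2,4)] assms(1)] assms(3)]
  by simp

lemma tendsto_rho_powr_Dprod_higher:
  fixes F :: "'a::euclidean_space \<Rightarrow> real"
  assumes "DIM('a) = n + 1" "smooth_on (- {0}) F" "norm \<theta> = 1"
    and "\<And>y. y \<in> ball 0 1 - {0} \<Longrightarrow> V y = rhoB y powr (a + k) * F y" "k > 0"
  shows "((\<lambda>x. rhoB x powr (- a) * Dprod n ts V x) \<longlongrightarrow> 0) (at \<theta> within ball 0 1)"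
  by (rule tendsto_has_boundary_term_higher[OF has_boundary_term_Dprod[OF
        has_boundary_term_rho_powr[OF assms(2,4)] assms(1)] assms(5,3)])

section \<open>The boundary operators\<close>

lemma rhoB_pos: "y \<in> ball 0 1 - {0} \<Longrightarrow> rhoB y > 0"
  by (simp add: rhoB_eq_rho_radial rho_radial_pos)

lemma Bpre_even_tendsto:
  fixes F :: "'a::euclidean_space \<Rightarrow> real"
  assumes "DIM('a) = n + 1" "smooth_on (- {0}) F" "norm \<theta> = 1"
  shows "(Bpre_even n \<gamma> j (\<lambda>x. rhoB x ^ (2 * j) * F x) \<longlongrightarrow>
      (\<Prod>t\<leftarrow>ts_even n \<gamma> j. indicial n (real n / 2 - \<gamma> + 2 * real j) t) * F \<theta>) (at \<theta> within ball 0 1)"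
    and "m > 0 \<Longrightarrow> (Bpre_even n \<gamma> j (\<lambda>x. rhoB x ^ (2 * j + 2 * m) * F x) \<longlongrightarrow> 0)
      (at \<theta> within ball 0 1)"
proof -
  let ?a = "real n / 2 - \<gamma> + 2 * real j"
  have exp: "- real n / 2 + \<gamma> - 2 * real j = - ?a" by simp
  have V0: "rhoB y powr (real n / 2 - \<gamma>) * (rhoB y ^ (2 * j) * F y) = rhoB y powr ?a * F y"
    and Vm: "rhoB y powr (real n / 2 - \<gamma>) * (rhoB y ^ (2 * j + 2 * m) * F y)
      = rhoB y powr (?a + 2 * real m) * F y" if "y \<in> ball 0 1 - {0}" for y
    using rhoB_pos[OF that]
    by (simp_all add: powr_realpow[symmetric] powr_add[symmetric] algebra_simps)
  note V = V0 Vm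
  show "(Bpre_even n \<gamma> j (\<lambda>x. rhoB x ^ (2 * j) * F x) \<longlongrightarrow>
      (\<Prod>t\<leftarrow>ts_even n \<gamma> j. indicial n ?a t) * F \<theta>) (at \<theta> within ball 0 1)"
    unfolding Bpre_even_def[abs_def] exp by (rule tendsto_rho_powr_Dprod[OF assms V(1)])
  show "m > 0 \<Longrightarrow> (Bpre_even n \<gamma> j (\<lambda>x. rhoB x ^ (2 * j + 2 * m) * F x) \<longlongrightarrow> 0)
      (at \<theta> within ball 0 1)"
    unfolding Bpre_even_def[abs_def] exp by (rule tendsto_rho_powr_Dprod_higher[OF assms V(2)]) auto
qed

lemma Bpre_odd_tendsto:
  fixes F :: "'a::euclidean_space \<Rightarrow> real"
  assumes "DIM('a) = n + 1" "smooth_on (- {0}) F" "norm \<theta> = 1"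
  shows "(Bpre_odd n \<gamma> j (\<lambda>x. rhoB x powr (2 * real j + 2 * fracp \<gamma>) * F x) \<longlongrightarrow>
      (\<Prod>t\<leftarrow>ts_odd n \<gamma> j. indicial n (real n / 2 - \<gamma> + 2 * real j + 2 * fracp \<gamma>) t) * F \<theta>)
      (at \<theta> within ball 0 1)"
    and "m > 0 \<Longrightarrow> (Bpre_odd n \<gamma> j (\<lambda>x. rhoB x powr (2 * real j + 2 * fracp \<gamma> + 2 * real m) * F x)
      \<longlongrightarrow> 0) (at \<theta> within ball 0 1)"
proof -
  let ?a = "real n / 2 - \<gamma> + 2 * real j + 2 * fracp \<gamma>"
  have exp: "- real n / 2 + \<gamma> - 2 * real j - 2 * fracp \<gamma> = - ?a" by simp
  have V0: "rhoB y powr (real n / 2 - \<gamma>) * (rhoB y powr (2 * real j + 2 * fracp \<gamma>) * F y)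
      = rhoB y powr ?a * F y"
    and Vm: "rhoB y powr (real n / 2 - \<gamma>) * (rhoB y powr (2 * real j + 2 * fracp \<gamma> + 2 * real m) * F y)
      = rhoB y powr (?a + 2 * real m) * F y" if "y \<in> ball 0 1 - {0}" for y
    using rhoB_pos[OF that] by (simp_all add: powr_add[symmetric] algebra_simps)
  note V = V0 Vm
  show "(Bpre_odd n \<gamma> j (\<lambda>x. rhoB x powr (2 * real j + 2 * fracp \<gamma>) * F x) \<longlongrightarrow>
      (\<Prod>t\<leftarrow>ts_odd n \<gamma> j. indicial n ?a t) * F \<theta>) (at \<theta> within ball 0 1)"
    unfolding Bpre_odd_def[abs_def] exp by (rule tendsto_rho_powr_Dprod[OF assms V(1)])
  show "m > 0 \<Longrightarrow> (Bpre_odd n \<gamma> j (\<lambda>x. rhoB x powr (2 * real j + 2 * fracp \<gamma> + 2 * real m) * F x)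
      \<longlongrightarrow> 0) (at \<theta> within ball 0 1)"
    unfolding Bpre_odd_def[abs_def] exp by (rule tendsto_rho_powr_Dprod_higher[OF assms V(2)]) auto
qed

lemma not_Ints_if_pos_not_Nats: "(\<gamma>::real) > 0 \<Longrightarrow> \<gamma> \<notin> \<nat> \<Longrightarrow> \<gamma> \<notin> \<int>"
  by (auto simp: Nats_altdef2)

lemma nat_floor_half_bounds:
  assumes "(\<gamma>::real) \<ge> 0"
  shows "2 * nat \<lfloor>\<gamma> / 2\<rfloor> \<le> nat \<lfloor>\<gamma>\<rfloor>" "nat \<lfloor>\<gamma>\<rfloor> \<le> 2 * nat \<lfloor>\<gamma> / 2\<rfloor> + 1"
proof -
  have "2 * \<lfloor>\<gamma> / 2\<rfloor> \<le> \<lfloor>\<gamma>\<rfloor>" "\<lfloor>\<gamma>\<rfloor> \<le> 2 * \<lfloor>\<gamma> / 2\<rfloor> + 1"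
    by (simp_all add: le_floor_iff floor_le_iff) linarith+
  then show "2 * nat \<lfloor>\<gamma> / 2\<rfloor> \<le> nat \<lfloor>\<gamma>\<rfloor>" "nat \<lfloor>\<gamma>\<rfloor> \<le> 2 * nat \<lfloor>\<gamma> / 2\<rfloor> + 1"
    using assms by linarith+
qed

lemma indicial_ts_even_nonzero:
  assumes "\<gamma> > 0" "\<gamma> \<notin> \<nat>" "j \<le> nat \<lfloor>\<gamma> / 2\<rfloor>"
  shows "(\<Prod>t\<leftarrow>ts_even n \<gamma> j. indicial n (real n / 2 - \<gamma> + 2 * real j) t) \<noteq> 0"
proof -
  have j: "2 * j \<le> nat \<lfloor>\<gamma>\<rfloor>" using nat_floor_half_bounds(1)[of \<gamma>] assms by linarith
  have "indicial n (real n / 2 - \<gamma> + 2 * real j) (sval n \<gamma> - 2 * real l) \<noteq> 0"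
    if l: "l \<in> set ([0..<j] @ [nat \<lfloor>\<gamma>\<rfloor> + 1 - j ..< nat \<lfloor>\<gamma>\<rfloor> + 1])" for l
  proof -
    have "l \<noteq> j" using l j by auto
    moreover have "\<gamma> \<noteq> real (j + l)" using assms(2) by (metis of_nat_in_Nats)
    moreover have "indicial n (real n / 2 - \<gamma> + 2 * real j) (sval n \<gamma> - 2 * real l)
        = (2 * real (j + l) - 2 * \<gamma>) * (2 * real l - 2 * real j)"
      by (simp add: indicial_def sval_def algebra_simps)
    ultimately show ?thesis by simp
  qed
  then show ?thesis unfolding ts_even_def prod_list_zero_iff by auto
qed

lemma indicial_ts_odd_nonzero:
  assumes "\<gamma> > 0" "\<gamma> \<notin> \<nat>" "j + 1 \<le> nat \<lfloor>\<gamma>\<rfloor> - nat \<lfloor>\<gamma> / 2\<rfloor>"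
  shows "(\<Prod>t\<leftarrow>ts_odd n \<gamma> j. indicial n (real n / 2 - \<gamma> + 2 * real j + 2 * fracp \<gamma>) t) \<noteq> 0"
proof -
  have j: "2 * j + 1 \<le> nat \<lfloor>\<gamma>\<rfloor>" using nat_floor_half_bounds(2)[of \<gamma>] assms by linarith
  have "indicial n (real n / 2 - \<gamma> + 2 * real j + 2 * fracp \<gamma>) (sval n \<gamma> - 2 * real l) \<noteq> 0"
    if l: "l \<in> set ([0..<j + 1] @ [nat \<lfloor>\<gamma>\<rfloor> + 1 - j ..< nat \<lfloor>\<gamma>\<rfloor> + 1])" for l
  proof -
    have "j + l \<noteq> nat \<lfloor>\<gamma>\<rfloor>" using l j by auto
    moreover have "of_int \<lfloor>\<gamma>\<rfloor> = real (nat \<lfloor>\<gamma>\<rfloor>)" using assms(1) by simp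
    ultimately have "real (j + l) \<noteq> of_int \<lfloor>\<gamma>\<rfloor>" by (metis of_nat_eq_iff)
    moreover have "\<gamma> \<noteq> of_int (\<lfloor>\<gamma>\<rfloor> + int l - int j)"
      using not_Ints_if_pos_not_Nats[OF assms(1,2)] Ints_of_int by metis
    moreover have "indicial n (real n / 2 - \<gamma> + 2 * real j + 2 * fracp \<gamma>) (sval n \<gamma> - 2 * real l)
        = (2 * real (j + l) - 2 * of_int \<lfloor>\<gamma>\<rfloor>) * (2 * real l - 2 * real j - 2 * fracp \<gamma>)"
      by (simp add: indicial_def sval_def fracp_def algebra_simps)
    ultimately show ?thesis by (auto simp: fracp_def)
  qed
  then show ?thesis unfolding ts_odd_def prod_list_zero_iff by auto
qed

lemma norm_base_pt: "norm (base_pt :: 'a::euclidean_space) = 1"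
proof -
  have "(base_pt :: 'a) \<in> Basis"
    unfolding base_pt_def by (rule someI_ex) (use nonempty_Basis in blast)
  then show ?thesis by simp
qed

lemma bdry_val_eqI:
  "norm (\<theta>::'a::euclidean_space) = 1 \<Longrightarrow> (V \<longlongrightarrow> c) (at \<theta> within ball 0 1) \<Longrightarrow> bdry_val V \<theta> = c"
  unfolding bdry_val_def by (rule tendsto_Lim) (simp add: trivial_limit_within islimpt_ball)

lemma b_even_eq:
  assumes "DIM('a::euclidean_space) = n + 1"
  shows "b_even n \<gamma> j TYPE('a) = (\<Prod>t\<leftarrow>ts_even n \<gamma> j. indicial n (real n / 2 - \<gamma> + 2 * real j) t)"
  using Bpre_even_tendsto(1)[OF assms smooth_on_const[of _ 1] norm_base_pt, of \<gamma> j]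
  unfolding b_even_def by (intro bdry_val_eqI[OF norm_base_pt]) simp

lemma b_odd_eq:
  assumes "DIM('a::euclidean_space) = n + 1"
  shows "b_odd n \<gamma> j TYPE('a) =
    - (\<Prod>t\<leftarrow>ts_odd n \<gamma> j. indicial n (real n / 2 - \<gamma> + 2 * real j + 2 * fracp \<gamma>) t)"
  using Bpre_odd_tendsto(1)[OF assms smooth_on_const[of _ 1] norm_base_pt, of \<gamma> j]
  unfolding b_odd_def by (simp add: bdry_val_eqI[OF norm_base_pt])

lemma Bfun_even_tendsto:
  fixes F :: "'a::euclidean_space \<Rightarrow> real"
  assumes n: "DIM('a) = n + 1" and \<gamma>: "\<gamma> > 0" "\<gamma> \<notin> \<nat>" and j: "j \<le> nat \<lfloor>\<gamma> / 2\<rfloor>"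
    and F: "smooth_on (- {0}) F" and \<theta>: "norm \<theta> = 1"
  shows "(Bfun_even n \<gamma> j (\<lambda>x. rhoB x ^ (2 * j) * F x) \<longlongrightarrow> F \<theta>) (at \<theta> within ball 0 1)"
    and "m > 0 \<Longrightarrow> (Bfun_even n \<gamma> j (\<lambda>x. rhoB x ^ (2 * j + 2 * m) * F x) \<longlongrightarrow> 0)
      (at \<theta> within ball 0 1)"
proof -
  have F\<theta>: "(F \<longlongrightarrow> F \<theta>) (at \<theta> within ball 0 1)"
    by (rule tendsto_smooth_on_punctured[OF F]) (use \<theta> in auto)
  let ?c = "\<Prod>t\<leftarrow>ts_even n \<gamma> j. indicial n (real n / 2 - \<gamma> + 2 * real j) t"
  have c: "?c \<noteq> 0" by (rule indicial_ts_even_nonzero[OF \<gamma> j])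
  note Bpre = Bpre_even_tendsto[OF n F \<theta>, where \<gamma>=\<gamma> and j=j]
  show "(Bfun_even n \<gamma> j (\<lambda>x. rhoB x ^ (2 * j) * F x) \<longlongrightarrow> F \<theta>) (at \<theta> within ball 0 1)"
  proof (cases "j = 0")
    case True
    then show ?thesis using F\<theta> by (simp add: Bfun_even_def[abs_def])
  next
    case False
    from tendsto_mult[OF tendsto_const[of "1 / ?c"] Bpre(1)] show ?thesis
      using False c by (simp add: Bfun_even_def[abs_def] b_even_eq[OF n])
  qed
  assume "m > 0"
  show "(Bfun_even n \<gamma> j (\<lambda>x. rhoB x ^ (2 * j + 2 * m) * F x) \<longlongrightarrow> 0) (at \<theta> within ball 0 1)"
  proof (cases "j = 0")
    case True
    from tendsto_mult[OF tendsto_power[OF tendsto_rhoB_sphere[OF \<theta>], of "2 * m"] F\<theta>]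
    show ?thesis using True \<open>m > 0\<close> by (simp add: Bfun_even_def[abs_def] power_0_left)
  next
    case False
    from tendsto_mult[OF tendsto_const[of "1 / ?c"] Bpre(2)[OF \<open>m > 0\<close>]] show ?thesis
      using False by (simp add: Bfun_even_def[abs_def] b_even_eq[OF n])
  qed
qed

lemma Bfun_odd_tendsto:
  fixes F :: "'a::euclidean_space \<Rightarrow> real"
  assumes n: "DIM('a) = n + 1" and \<gamma>: "\<gamma> > 0" "\<gamma> \<notin> \<nat>"
    and j: "j + 1 \<le> nat \<lfloor>\<gamma>\<rfloor> - nat \<lfloor>\<gamma> / 2\<rfloor>"
    and F: "smooth_on (- {0}) F" and \<theta>: "norm \<theta> = 1"
  shows "(Bfun_odd n \<gamma> j (\<lambda>x. rhoB x powr (2 * real j + 2 * fracp \<gamma>) * F x) \<longlongrightarrow> F \<theta>)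
      (at \<theta> within ball 0 1)"
    and "m > 0 \<Longrightarrow> (Bfun_odd n \<gamma> j (\<lambda>x. rhoB x powr (2 * real j + 2 * fracp \<gamma> + 2 * real m) * F x)
      \<longlongrightarrow> 0) (at \<theta> within ball 0 1)"
proof -
  let ?c = "\<Prod>t\<leftarrow>ts_odd n \<gamma> j. indicial n (real n / 2 - \<gamma> + 2 * real j + 2 * fracp \<gamma>) t"
  have c: "?c \<noteq> 0" by (rule indicial_ts_odd_nonzero[OF \<gamma> j])
  note Bpre = Bpre_odd_tendsto[OF n F \<theta>, where \<gamma>=\<gamma> and j=j]
  from tendsto_mult[OF tendsto_const[of "1 / ?c"] Bpre(1)]
  show "(Bfun_odd n \<gamma> j (\<lambda>x. rhoB x powr (2 * real j + 2 * fracp \<gamma>) * F x) \<longlongrightarrow> F \<theta>)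
      (at \<theta> within ball 0 1)"
    using c by (simp add: Bfun_odd_def[abs_def] b_odd_eq[OF n])
  assume "m > 0"
  from tendsto_mult[OF tendsto_const[of "1 / ?c"] Bpre(2)[OF this]]
  show "(Bfun_odd n \<gamma> j (\<lambda>x. rhoB x powr (2 * real j + 2 * fracp \<gamma> + 2 * real m) * F x)
      \<longlongrightarrow> 0) (at \<theta> within ball 0 1)"
    by (simp add: Bfun_odd_def[abs_def] b_odd_eq[OF n])
qed

theorem lemma4p5:
  fixes \<gamma> :: real and f :: "'a::euclidean_space \<Rightarrow> real" and n m :: nat
  assumes "n \<ge> 1" and "DIM('a) = n + 1"
    and "\<gamma> > 0" and "\<gamma> \<notin> \<nat>"
    and "smooth_on_sphere f"
    and "m \<ge> 1"
  shows "(\<forall>j \<le> nat \<lfloor>\<gamma> / 2\<rfloor>. \<forall>\<theta> \<in> sphere 0 1.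
            (Bfun_even n \<gamma> j (\<lambda>x. rhoB x ^ (2 * j) * radial_ext f x) \<longlongrightarrow> f \<theta>)
              (at \<theta> within ball 0 1) \<and>
            (Bfun_even n \<gamma> j (\<lambda>x. rhoB x ^ (2 * j + 2 * m) * radial_ext f x) \<longlongrightarrow> 0)
              (at \<theta> within ball 0 1))
       \<and> (\<forall>j. j + 1 \<le> nat \<lfloor>\<gamma>\<rfloor> - nat \<lfloor>\<gamma> / 2\<rfloor> \<longrightarrow> (\<forall>\<theta> \<in> sphere 0 1.
            (Bfun_odd n \<gamma> j (\<lambda>x. rhoB x powr (2 * real j + 2 * fracp \<gamma>) * radial_ext f x)
               \<longlongrightarrow> f \<theta>) (at \<theta> within ball 0 1) \<and>
            (Bfun_odd n \<gamma> j (\<lambda>x. rhoB x powr (2 * real j + 2 * fracp \<gamma> + 2 * real m) * radial_ext f x)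
               \<longlongrightarrow> 0) (at \<theta> within ball 0 1)))"
proof -
  have F: "smooth_on (- {0}) (radial_ext f)"
    using assms(5) unfolding smooth_on_sphere_def .
  have F\<theta>: "radial_ext f \<theta> = f \<theta>" if "\<theta> \<in> sphere 0 1" for \<theta> :: 'a
    using that by (simp add: radial_ext_def)
  have m: "m > 0"
    using assms(6) by simp
  show ?thesis
    using Bfun_even_tendsto[OF assms(2-4) _ F] Bfun_odd_tendsto[OF assms(2-4) _ F] F\<theta> m by auto
qed

end
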